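(* Let $X$ be a nonempty countable set, $\mathcal D$ a distribution on $X$, $\rho$ a cost function on $X$ of finite degree $d\ge1$, and $m,n,k_{\max}\ge1$ integers with $n+k_{\max}\le m/2$. Let $\mu\in\mathscr D^{m,\rho,\mathcal D}_{\mathrm{adaptive}}$. Then there is an integer $k$ with $0\le k\le k_{\max}$ such that $$\mathbb E_{(S,c)\sim\mathrm{Grouped}_{n,k}(\mu)}\Big[d_{\mathrm{TV}}\big(\mathrm{Group}_n(\mu,c),\ \mathcal D_{\mathrm{goal}}(c)^n\big)\Big]\le\sqrt{\frac{n^2\ln d}{2k_{\max}}}.$$
   Context: All distributions are discrete. A cost function on $X$ is $\rho:X\times X\to\mathbb R_{\ge0}\cup\{\infty\}$ with $\rho(x,x)=0$; its degree is $\sup_x\#\{y:\rho(x,y)\ne\infty\}$. For $S\in X^m$, $\mathcal C_\rho(S)=\{S'\in X^m:\frac1m\sum_i\rho(S_i,S'_i)\le1\}$. $\mathscr D^{m,\rho,\mathcal D}_{\mathrm{adaptive}}$ is the set of distributions $\mu$ on $X^m$ for which there is a coupling of $S'\sim\mu$ and $S\sim\mathcal D^m$ with $S'\in\mathcal C_\rho(S)$ almost surely. $\mathrm{Grouped}_{n,k}(\mu)$ is the joint distribution of $(S,c)\in X^n\times X^k$ obtained by drawing $S_{\mathrm{big}}\sim\mu$, drawing a uniformly random sequence $(i_1,\dots,i_{n+k})$ of distinct indices of $[m]$, and setting $S=(S_{\mathrm{big},i_1},\dots,S_{\mathrm{big},i_n})$, $c=(S_{\mathrm{big},i_{n+1}},\dots,S_{\mathrm{big},i_{n+k}})$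 (the "core"). $\mathrm{Group}_n(\mu,c)$ is the conditional distribution of $S$ given $c$. $\mathcal D_{\mathrm{goal}}(c)$ is the distribution on $X$ of a uniformly random coordinate of $S\sim\mathrm{Group}_n(\mu,c)$, i.e. $\mathbb E_{S\sim\mathrm{Group}_n(\mu,c)}[\mathrm{Unif}(S)]$. $d_{\mathrm{TV}}$ is total variation distance. *)

theory Defs
  imports "HOL-Probability.Probability"
begin

definition is_cost :: "('a \<Rightarrow> 'a \<Rightarrow> ennreal) \<Rightarrow> bool" where
  "is_cost \<rho> \<longleftrightarrow> (\<forall>x. \<rho> x x = 0)"

definition cost_degree :: "('a \<Rightarrow> 'a \<Rightarrow> ennreal) \<Rightarrow> enat" where
  "cost_degree \<rho> = (SUP x. (if finite {y. \<rho> x y \<noteq> \<infinity>} then enat (card {y. \<rho> x y \<noteq> \<infinity>}) else \<infinity>))"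

definition cost_ball :: "('a \<Rightarrow> 'a \<Rightarrow> ennreal) \<Rightarrow> 'a list \<Rightarrow> 'a list set" where
  "cost_ball \<rho> S = {S'. length S' = length S \<and>
      (\<Sum>i<length S. \<rho> (S ! i) (S' ! i)) / of_nat (length S) \<le> 1}"

definition adaptive :: "nat \<Rightarrow> ('a \<Rightarrow> 'a \<Rightarrow> ennreal) \<Rightarrow> 'a pmf \<Rightarrow> 'a list pmf set" where
  "adaptive m \<rho> D = {\<mu>. \<exists>\<nu> :: ('a list \<times> 'a list) pmf.
      map_pmf fst \<nu> = \<mu> \<and> map_pmf snd \<nu> = replicate_pmf m D \<and>
      (\<forall>(S', S) \<in> set_pmf \<nu>. S' \<in> cost_ball \<rho> S)}"

text \<open>Grouped_{n,k}(mu); m is the common length of the samples drawn from mu.\<close>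
definition grouped :: "nat \<Rightarrow> nat \<Rightarrow> nat \<Rightarrow> 'a list pmf \<Rightarrow> ('a list \<times> 'a list) pmf" where
  "grouped m n k \<mu> = do {
      Sbig \<leftarrow> \<mu>;
      is \<leftarrow> pmf_of_set {is. distinct is \<and> length is = n + k \<and> set is \<subseteq> {..<m}};
      return_pmf (map (\<lambda>i. Sbig ! i) (take n is), map (\<lambda>i. Sbig ! i) (drop n is))
   }"

definition group :: "nat \<Rightarrow> nat \<Rightarrow> 'a list pmf \<Rightarrow> 'a list \<Rightarrow> 'a list pmf" where
  "group m n \<mu> c = map_pmf fst (cond_pmf (grouped m n (length c) \<mu>) {p. snd p = c})"

definition D_goal :: "nat \<Rightarrow> nat \<Rightarrow> 'a list pmf \<Rightarrow> 'a list \<Rightarrow> 'a pmf" where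
  "D_goal m n \<mu> c = do { S \<leftarrow> group m n \<mu> c; i \<leftarrow> pmf_of_set {..<length S}; return_pmf (S ! i) }"

definition tv_dist :: "'a pmf \<Rightarrow> 'a pmf \<Rightarrow> real" where
  "tv_dist p q = (SUP A. \<bar>measure_pmf.prob p A - measure_pmf.prob q A\<bar>)"

end

theory Submission
  imports Defs
begin

text \<open>Let \<open>A t\<close> be the law of the values of \<open>S' \<sim> \<mu>\<close> at \<open>t\<close> distinct uniformly random
  positions. It is exchangeable, and since every coordinate of \<open>S'\<close> lies at finite cost from
  the corresponding coordinate of an i.i.d. sample of \<open>D\<close>, it is dominated by \<open>(d Z)\<^sup>t\<close>,
  where \<open>Z\<close> moves a point drawn from \<open>D\<close> to a uniformly random point at finite cost.
  Hence \<open>h t = KL(A t \<parallel> Z\<^sup>t) - t ln d\<close> satisfies \<open>-t ln d \<le> h t \<le> 0\<close> and \<open>h 0 = 0\<close>,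
  and \<open>h\<close> is convex (Gibbs' inequality against a Markov approximation). By the chain rule the
  expected KL divergence of \<open>Group\<^sub>n(\<mu>,c)\<close> from \<open>D\<^sub>g\<^sub>o\<^sub>a\<^sub>l(c)\<^sup>n\<close> is
  \<open>h (n+k) - h k - n (h (k+1) - h k)\<close>; averaging over \<open>k \<le> k\<^sub>m\<^sub>a\<^sub>x\<close> makes it at most
  \<open>n\<^sup>2 ln d / k\<^sub>m\<^sub>a\<^sub>x\<close> for some \<open>k\<close>, and Pinsker's and Jensen's inequalities turn
  this into the bound on the expected total variation distance.\<close>

section \<open>Pinsker, Gibbs and Jensen inequalities for pmfs\<close>

lemma four_le_inverse_mult_one_minus:
  fixes x :: real assumes "0 < x" "x < 1"
  shows "4 \<le> 1 / (x * (1 - x))"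
proof -
  have "x * (1 - x) \<le> 1/4"
    using sum_power2_ge_zero[of "x - 1/2" 0] by (simp add: power2_eq_square algebra_simps)
  then show ?thesis using assms by (simp add: field_simps)
qed

lemma cross_entropy_penalty_deriv:
  fixes a x :: real assumes "0 < x" "x < 1"
  shows "((\<lambda>x. - a * ln x - (1-a) * ln (1-x) - 2 * (a-x)^2) has_real_derivative
          (x - a) * (1 / (x * (1-x)) - 4)) (at x)"
proof -
  have "x \<noteq> 0" "1 - x \<noteq> 0" using assms by auto
  then have "- a * (1/x) - (1-a) * (-1 / (1-x)) - 2 * (2 * (a-x) * -1) = (x - a) * (1 / (x * (1-x)) - 4)"
    by (simp add: field_simps)
  then show ?thesis
    using assms by (auto intro!: derivative_eq_intros simp: power2_eq_square)
qed

text \<open>By the previous lemma \<open>G\<close> decreases on \<open>(0, a]\<close> and increases on \<open>[a, 1)\<close>.\<close>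
lemma cross_entropy_penalty_min:
  fixes a b :: real
  assumes a: "0 \<le> a" "a \<le> 1" and b: "0 < b" "b < 1"
  defines "G \<equiv> \<lambda>x. - a * ln x - (1-a) * ln (1-x) - 2 * (a-x)^2"
  shows "G a \<le> G b"
proof -
  have G_deriv: "(G has_real_derivative (x - a) * (1 / (x * (1-x)) - 4)) (at x)"
    if "0 < x" "x < 1" for x
    unfolding G_def using cross_entropy_penalty_deriv[OF that] .
  show ?thesis
  proof (cases "a \<le> b")
    case True
    have "continuous_on {a..b} G"
    proof (cases "a = 0")
      case True
      have "continuous_on {a..b} (\<lambda>x::real. - (1-a) * ln (1-x) - 2 * (a-x)^2)"
        using b \<open>a \<le> b\<close> by (auto intro!: continuous_intros)
      then show ?thesis using True by (simp add: G_def)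
    qed (use b \<open>a \<le> b\<close> a in \<open>auto simp: G_def intro!: continuous_intros\<close>)
    moreover have "\<exists>y. (G has_real_derivative y) (at x) \<and> 0 \<le> y" if x: "a < x" "x < b" for x
    proof -
      have "0 < x" "x < 1" using x a b by auto
      then have "0 \<le> (x - a) * (1 / (x * (1-x)) - 4)"
        using four_le_inverse_mult_one_minus x by (intro mult_nonneg_nonneg) auto
      then show ?thesis using G_deriv \<open>0 < x\<close> \<open>x < 1\<close> by blast
    qed
    ultimately show ?thesis using DERIV_nonneg_imp_increasing_open[OF True] by blast
  next
    case False
    have "continuous_on {b..a} G"
    proof (cases "a = 1")
      case True
      have "continuous_on {b..a} (\<lambda>x::real. - a * ln x - 2 * (a-x)^2)"
        using b False by (auto intro!: continuous_intros)
      then show ?thesis using True by (simp add: G_def)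
    qed (use b False a in \<open>auto simp: G_def intro!: continuous_intros\<close>)
    moreover have "\<exists>y. (G has_real_derivative y) (at x) \<and> y \<le> 0" if x: "b < x" "x < a" for x
    proof -
      have "0 < x" "x < 1" using x a b by auto
      then have "(x - a) * (1 / (x * (1-x)) - 4) \<le> 0"
        using four_le_inverse_mult_one_minus x by (intro mult_nonpos_nonneg) auto
      then show ?thesis using G_deriv \<open>0 < x\<close> \<open>x < 1\<close> by blast
    qed
    moreover have "b \<le> a" using False by simp
    ultimately show ?thesis using DERIV_nonpos_imp_decreasing_open[of b a G] by blast
  qed
qed

lemma binary_pinsker:
  fixes a b :: real
  assumes a: "0 \<le> a" "a \<le> 1" and b: "0 \<le> b" "b \<le> 1"
    and pos: "a > 0 \<Longrightarrow> b > 0" and pos': "a < 1 \<Longrightarrow> b < 1"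
  shows "2 * (a-b)^2 \<le> a * ln (a/b) + (1-a) * ln ((1-a)/(1-b))"
proof -
  consider "b = 0" | "b = 1" | "0 < b" "b < 1" using b by linarith
  then show ?thesis
  proof cases
    case 1 then show ?thesis using pos a by force
  next
    case 2 then show ?thesis using pos' a by force
  next
    case 3
    have "a * ln (a/b) = a * ln a - a * ln b"
      using a 3 by (cases "a = 0") (auto simp: ln_div algebra_simps)
    moreover have "(1-a) * ln ((1-a)/(1-b)) = (1-a) * ln (1-a) - (1-a) * ln (1-b)"
      using a 3 by (cases "a = 1") (auto simp: ln_div algebra_simps)
    ultimately show ?thesis using cross_entropy_penalty_min[OF a 3] by simp
  qed
qed

lemma measure_pmf_pos_if_support_pos:
  assumes "\<And>x. x \<in> set_pmf p \<Longrightarrow> pmf q x > 0" and "measure p A > 0"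
  shows "measure q A > 0"
proof -
  obtain x where x: "x \<in> set_pmf p" "x \<in> A"
    using assms(2) measure_pmf_zero_iff[of p A] by auto
  have "pmf q x \<le> measure q A"
    using x by (simp add: measure_pmf_single[symmetric] measure_pmf.finite_measure_mono)
  then show ?thesis using assms(1)[OF x(1)] by simp
qed

lemma likelihood_ratio_integral_le:
  fixes p q :: "'a pmf" and A :: "'a set"
  defines "u \<equiv> \<lambda>x. indicator A x * (pmf q x / pmf p x)"
  shows "integrable p u" and "(\<integral>x. u x \<partial>p) \<le> measure q A"
proof -
  have u_nonneg: "0 \<le> u x" for x unfolding u_def by simp
  have "(\<integral>\<^sup>+x. u x \<partial>p) = (\<integral>\<^sup>+x. ennreal (pmf p x) * ennreal (u x) \<partial>count_space UNIV)"
    by (simp add: nn_integral_measure_pmf)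
  also have "\<dots> \<le> (\<integral>\<^sup>+x. ennreal (pmf q x) * indicator A x \<partial>count_space UNIV)"
  proof (intro nn_integral_mono)
    fix x
    show "ennreal (pmf p x) * ennreal (u x) \<le> ennreal (pmf q x) * indicator A x"
    proof (cases "pmf p x = 0 \<or> x \<notin> A")
      case False
      then have "pmf p x * u x = pmf q x" unfolding u_def by simp
      then show ?thesis using False by (simp add: ennreal_mult[symmetric] u_nonneg)
    qed (auto simp: u_def)
  qed
  also have "\<dots> = ennreal (measure q A)"
    by (simp add: nn_integral_measure_pmf[symmetric] measure_pmf.emeasure_eq_measure)
  finally have nn: "(\<integral>\<^sup>+x. u x \<partial>p) \<le> ennreal (measure q A)" .
  then show "integrable p u"
    using u_nonneg by (intro integrableI_nonneg) (auto simp: top_unique intro: le_less_trans)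
  have "(\<integral>x. u x \<partial>p) = enn2real (\<integral>\<^sup>+x. u x \<partial>p)"
    using u_nonneg by (intro integral_eq_nn_integral) auto
  also have "\<dots> \<le> measure q A"
    using enn2real_mono[OF nn] by simp
  finally show "(\<integral>x. u x \<partial>p) \<le> measure q A" .
qed

lemma ln_ratio_ge_tangent:
  fixes p q a b :: real
  assumes "0 < p" "0 < q" "0 < a" "0 < b"
  shows "ln (a/b) + 1 - (a/b) * (q/p) \<le> ln (p/q)"
proof -
  define y where "y = (p * b) / (q * a)"
  have "0 < y" unfolding y_def using assms by simp
  then have "1 - 1/y \<le> ln y" using ln_le_minus_one[of "1/y"] by (simp add: ln_div)
  moreover have "ln y = ln (p/q) - ln (a/b)" unfolding y_def using assms by (simp add: ln_div ln_mult)
  moreover have "1/y = (a/b) * (q/p)" unfolding y_def using assms by (simp add: field_simps)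
  ultimately show ?thesis by simp
qed

text \<open>The log-sum inequality, with the sum over \<open>A\<close> replaced by an integral; it follows by
  integrating the previous lemma with \<open>a = P(A)\<close>, \<open>b = Q(A)\<close>.\<close>
lemma log_sum_inequality_pmf:
  fixes p q :: "'a pmf"
  assumes pos: "\<And>x. x \<in> set_pmf p \<Longrightarrow> pmf q x > 0"
    and int: "integrable p (\<lambda>x. ln (pmf p x / pmf q x))"
  shows "measure p A * ln (measure p A / measure q A)
           \<le> (\<integral>x. indicator A x * ln (pmf p x / pmf q x) \<partial>p)"
proof -
  define a where "a = measure p A"
  define b where "b = measure q A"
  define l where "l = (\<lambda>x. ln (pmf p x / pmf q x))"
  define u where "u = (\<lambda>x. indicator A x * (pmf q x / pmf p x))"
  have intA: "integrable p (\<lambda>x. indicator A x * l x)"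
    using integrable_mult_indicator[of A p l] int unfolding l_def by simp
  show ?thesis
  proof (cases "a = 0")
    case True
    have "indicator A x * l x = 0" if "x \<in> set_pmf p" for x
      using measure_pmf_posI[OF that, of A] True unfolding a_def by (auto simp: indicator_def)
    then have "(\<integral>x. indicator A x * l x \<partial>p) = 0"
      by (intro integral_eq_zero_AE) (simp add: AE_measure_pmf_iff)
    then show ?thesis using True unfolding a_def l_def by simp
  next
    case False
    then have a_pos: "a > 0" unfolding a_def by (simp add: zero_less_measure_iff)
    then have b_pos: "b > 0"
      using measure_pmf_pos_if_support_pos[of p q A] pos unfolding a_def b_def by blast
    note u = likelihood_ratio_integral_le[where p=p and q=q and A=A, folded u_def b_def]
    have int_ind: "integrable p (indicator A :: 'a \<Rightarrow> real)"
      by (rule measure_pmf.integrable_const_bound[where B=1]) (auto simp: indicator_def)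
    have "indicator A x * (ln (a/b) + 1) - (a/b) * u x \<le> indicator A x * l x"
      if x: "x \<in> set_pmf p" for x
      using ln_ratio_ge_tangent[of "pmf p x" "pmf q x" a b] pos[OF x] a_pos b_pos x
      unfolding u_def l_def by (cases "x \<in> A") (auto simp: pmf_positive)
    then have "(\<integral>x. indicator A x * (ln (a/b) + 1) - (a/b) * u x \<partial>p) \<le> (\<integral>x. indicator A x * l x \<partial>p)"
      using intA int_ind u(1) by (intro integral_mono_AE) (auto simp: AE_measure_pmf_iff)
    moreover have "(\<integral>x. indicator A x * (ln (a/b) + 1) - (a/b) * u x \<partial>p)
        = a * (ln (a/b) + 1) - (a/b) * (\<integral>x. u x \<partial>p)"
      using int_ind u(1) unfolding a_def by (subst Bochner_Integration.integral_diff) auto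
    moreover have "(a/b) * (\<integral>x. u x \<partial>p) \<le> (a/b) * b"
      using u(2) a_pos b_pos by (intro mult_left_mono) auto
    ultimately show ?thesis using b_pos unfolding a_def b_def l_def by (simp add: algebra_simps)
  qed
qed

lemma gibbs_inequality_pmf:
  fixes p q :: "'a pmf"
  assumes "\<And>x. x \<in> set_pmf p \<Longrightarrow> pmf q x > 0"
    and "integrable p (\<lambda>x. ln (pmf p x / pmf q x))"
  shows "0 \<le> (\<integral>x. ln (pmf p x / pmf q x) \<partial>p)"
  using log_sum_inequality_pmf[OF assms, of UNIV] by simp

lemma pinsker_inequality_pmf:
  fixes p q :: "'a pmf"
  assumes pos: "\<And>x. x \<in> set_pmf p \<Longrightarrow> pmf q x > 0"
    and int: "integrable p (\<lambda>x. ln (pmf p x / pmf q x))"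
  shows "tv_dist p q \<le> sqrt ((\<integral>x. ln (pmf p x / pmf q x) \<partial>p) / 2)"
  unfolding tv_dist_def
proof (rule cSUP_least)
  fix A
  define l where "l = (\<lambda>x. ln (pmf p x / pmf q x))"
  define a where "a = measure p A"
  define b where "b = measure q A"
  have compl: "measure p (-A) = 1 - a" "measure q (-A) = 1 - b"
    unfolding a_def b_def using measure_pmf.prob_compl by (auto simp: Compl_eq_Diff_UNIV)
  have "(\<integral>x. l x \<partial>p) = (\<integral>x. indicator A x * l x + indicator (-A) x * l x \<partial>p)"
    by (intro Bochner_Integration.integral_cong) (auto simp: indicator_def)
  also have "\<dots> = (\<integral>x. indicator A x * l x \<partial>p) + (\<integral>x. indicator (-A) x * l x \<partial>p)"
    using int integrable_mult_indicator[of _ p l] unfolding l_def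
    by (intro Bochner_Integration.integral_add) auto
  finally have split: "(\<integral>x. l x \<partial>p) = (\<integral>x. indicator A x * l x \<partial>p) + (\<integral>x. indicator (-A) x * l x \<partial>p)" .
  have "a * ln (a/b) \<le> (\<integral>x. indicator A x * l x \<partial>p)"
    using log_sum_inequality_pmf[OF pos int, of A] unfolding a_def b_def l_def .
  moreover have "(1-a) * ln ((1-a)/(1-b)) \<le> (\<integral>x. indicator (-A) x * l x \<partial>p)"
    using log_sum_inequality_pmf[OF pos int, of "-A"] compl unfolding l_def by simp
  moreover have "2 * (a-b)^2 \<le> a * ln (a/b) + (1-a) * ln ((1-a)/(1-b))"
  proof (rule binary_pinsker)
    show "0 \<le> a" "a \<le> 1" "0 \<le> b" "b \<le> 1" unfolding a_def b_def by auto
    show "a > 0 \<Longrightarrow> b > 0"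
      using measure_pmf_pos_if_support_pos[OF pos, where A=A] unfolding a_def b_def by blast
    show "a < 1 \<Longrightarrow> b < 1"
      using measure_pmf_pos_if_support_pos[OF pos, where A="-A"] compl by simp
  qed
  ultimately have "2 * (a-b)^2 \<le> (\<integral>x. l x \<partial>p)" using split by linarith
  then have "sqrt ((a-b)^2) \<le> sqrt ((\<integral>x. l x \<partial>p) / 2)"
    by (intro real_sqrt_le_mono) simp
  then show "\<bar>measure_pmf.prob p A - measure_pmf.prob q A\<bar> \<le> sqrt ((\<integral>x. ln (pmf p x / pmf q x) \<partial>p) / 2)"
    unfolding a_def b_def l_def by simp
qed simp

lemma sqrt_le_tangent:
  fixes y t :: real assumes "0 \<le> y" "0 < t"
  shows "sqrt y \<le> (y + t^2) / (2 * t)"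
proof -
  have "2 * t * sqrt y \<le> y + t^2"
    using sum_power2_ge_zero[of "sqrt y - t" 0] assms by (simp add: power2_eq_square algebra_simps)
  then show ?thesis using assms by (simp add: field_simps)
qed

text \<open>Jensen's inequality for the concave function \<open>sqrt\<close>, obtained by integrating
  the tangent bound at \<open>t\<^sup>2 = E f\<close>.\<close>
lemma integral_sqrt_le_sqrt_integral:
  fixes p :: "'a pmf" and f :: "'a \<Rightarrow> real"
  assumes int: "integrable p f" and nonneg: "\<And>x. x \<in> set_pmf p \<Longrightarrow> 0 \<le> f x"
  shows "(\<integral>x. sqrt (f x) \<partial>p) \<le> sqrt (\<integral>x. f x \<partial>p)"
proof -
  define E where "E = (\<integral>x. f x \<partial>p)"
  have tangent: "(\<integral>x. sqrt (f x) \<partial>p) \<le> (E + t^2) / (2 * t)" if "0 < t" for t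
  proof -
    have bound: "sqrt (f x) \<le> (f x + t^2) / (2 * t)" if "x \<in> set_pmf p" for x
      using sqrt_le_tangent[OF nonneg[OF that] \<open>0 < t\<close>] .
    have int_bound: "integrable p (\<lambda>x. (f x + t^2) / (2 * t))" using int by simp
    have "AE x in p. norm (sqrt (f x)) \<le> norm ((f x + t^2) / (2 * t))"
    proof (unfold AE_measure_pmf_iff, intro ballI)
      fix x assume "x \<in> set_pmf p"
      then show "norm (sqrt (f x)) \<le> norm ((f x + t^2) / (2 * t))"
        using bound nonneg \<open>0 < t\<close> by (simp add: abs_of_nonneg add_nonneg_nonneg)
    qed
    then have "integrable p (\<lambda>x. sqrt (f x))"
      by (intro Bochner_Integration.integrable_bound[OF int_bound]) simp_all
    then have "(\<integral>x. sqrt (f x) \<partial>p) \<le> (\<integral>x. (f x + t^2) / (2 * t) \<partial>p)"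
      using int_bound bound by (intro integral_mono_AE) (auto simp: AE_measure_pmf_iff)
    also have "\<dots> = (E + t^2) / (2 * t)" using int unfolding E_def by simp
    finally show ?thesis .
  qed
  have "0 \<le> E" unfolding E_def using nonneg by (intro integral_nonneg_AE) (simp add: AE_measure_pmf_iff)
  show ?thesis
  proof (cases "E = 0")
    case False
    then have "0 < sqrt E" using \<open>0 \<le> E\<close> by simp
    moreover have "(E + (sqrt E)^2) / (2 * sqrt E) = sqrt E"
      using \<open>0 \<le> E\<close> by (simp add: real_div_sqrt)
    ultimately show ?thesis using tangent[of "sqrt E"] unfolding E_def by simp
  next
    case True
    have "(\<integral>x. sqrt (f x) \<partial>p) \<le> 0"
    proof (rule ccontr)
      assume "\<not> ?thesis"
      then have V: "0 < (\<integral>x. sqrt (f x) \<partial>p)" by simp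
      have "(\<integral>x. sqrt (f x) \<partial>p) \<le> (\<integral>x. sqrt (f x) \<partial>p) / 2"
        using tangent[OF V] True V by (simp add: power2_eq_square)
      then show False using V by simp
    qed
    then show ?thesis using True unfolding E_def by simp
  qed
qed

section \<open>Integrals over \<open>bind_pmf\<close> and \<open>replicate_pmf\<close>\<close>

lemma pmf_mult_le_nn_integral:
  fixes g :: "'a \<Rightarrow> ennreal"
  shows "ennreal (pmf p x) * g x \<le> (\<integral>\<^sup>+y. g y \<partial>measure_pmf p)"
proof -
  have "g x * emeasure p {x} = (\<integral>\<^sup>+y. g x * indicator {x} y \<partial>measure_pmf p)"
    by (rule nn_integral_cmult_indicator[symmetric]) simp
  also have "\<dots> \<le> (\<integral>\<^sup>+y. g y \<partial>measure_pmf p)"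
    by (intro nn_integral_mono) (auto simp: indicator_def)
  finally show ?thesis by (simp add: emeasure_pmf_single mult.commute)
qed

lemma integrable_bind_pmf_kernel:
  fixes f :: "'b \<Rightarrow> real"
  assumes int: "integrable (bind_pmf p K) f" and x: "x \<in> set_pmf p"
  shows "integrable (K x) f"
proof -
  have "ennreal (pmf p x) * (\<integral>\<^sup>+y. norm (f y) \<partial>K x) \<le> (\<integral>\<^sup>+y. norm (f y) \<partial>bind_pmf p K)"
    using pmf_mult_le_nn_integral[of p x "\<lambda>x. \<integral>\<^sup>+y. norm (f y) \<partial>K x"] by simp
  also have "\<dots> < \<infinity>" using int by (simp add: integrable_iff_bounded)
  finally have "(\<integral>\<^sup>+y. norm (f y) \<partial>K x) < \<infinity>"
    using x by (auto simp: ennreal_mult_less_top set_pmf_iff)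
  then show ?thesis by (simp add: integrable_iff_bounded)
qed

lemma integrable_integral_bind_pmf_nonneg:
  fixes f :: "'b \<Rightarrow> real"
  assumes int: "integrable (bind_pmf p K) f" and nonneg: "\<And>y. 0 \<le> f y"
  shows "integrable p (\<lambda>x. \<integral>y. f y \<partial>K x)"
    and "(\<integral>y. f y \<partial>bind_pmf p K) = (\<integral>x. (\<integral>y. f y \<partial>K x) \<partial>p)"
proof -
  have inner_nonneg: "0 \<le> (\<integral>y. f y \<partial>K x)" for x using nonneg by (simp add: integral_nonneg)
  have "(\<integral>\<^sup>+y. f y \<partial>bind_pmf p K) = (\<integral>\<^sup>+x. (\<integral>\<^sup>+y. f y \<partial>K x) \<partial>p)"
    by simp
  also have "\<dots> = (\<integral>\<^sup>+x. (\<integral>y. f y \<partial>K x) \<partial>p)"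
    using integrable_bind_pmf_kernel[OF int] nonneg
    by (intro nn_integral_cong_AE) (auto simp: AE_measure_pmf_iff intro!: nn_integral_eq_integral)
  finally have nn: "(\<integral>\<^sup>+y. f y \<partial>bind_pmf p K) = (\<integral>\<^sup>+x. (\<integral>y. f y \<partial>K x) \<partial>p)" .
  moreover have "(\<integral>\<^sup>+y. f y \<partial>bind_pmf p K) < \<infinity>"
    using int nonneg by (simp add: integrable_iff_bounded)
  ultimately show "integrable p (\<lambda>x. \<integral>y. f y \<partial>K x)"
    using inner_nonneg by (intro integrableI_nonneg) auto
  have "(\<integral>y. f y \<partial>bind_pmf p K) = enn2real (\<integral>\<^sup>+y. f y \<partial>bind_pmf p K)"
    using nonneg by (intro integral_eq_nn_integral) auto
  also have "\<dots> = (\<integral>x. (\<integral>y. f y \<partial>K x) \<partial>p)"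
    unfolding nn using inner_nonneg by (intro integral_eq_nn_integral[symmetric]) auto
  finally show "(\<integral>y. f y \<partial>bind_pmf p K) = (\<integral>x. (\<integral>y. f y \<partial>K x) \<partial>p)" .
qed

text \<open>Fubini for \<open>bind_pmf\<close> without a boundedness assumption: split \<open>f = f\<^sup>+ - f\<^sup>-\<close>.\<close>
lemma integrable_integral_bind_pmf:
  fixes f :: "'b \<Rightarrow> real"
  assumes int: "integrable (bind_pmf p K) f"
  shows "integrable p (\<lambda>x. \<integral>y. f y \<partial>K x)"
    and "(\<integral>y. f y \<partial>bind_pmf p K) = (\<integral>x. (\<integral>y. f y \<partial>K x) \<partial>p)"
proof -
  define fp where "fp = (\<lambda>y. max (f y) 0)"
  define fm where "fm = (\<lambda>y. max (- f y) 0)"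
  have ip: "integrable (bind_pmf p K) fp" and im: "integrable (bind_pmf p K) fm"
    unfolding fp_def fm_def using int by auto
  have f_split: "f = (\<lambda>y. fp y - fm y)" unfolding fp_def fm_def by auto
  note P = integrable_integral_bind_pmf_nonneg[OF ip] and M = integrable_integral_bind_pmf_nonneg[OF im]
  have inner: "AE x in p. (\<integral>y. f y \<partial>K x) = (\<integral>y. fp y \<partial>K x) - (\<integral>y. fm y \<partial>K x)"
    unfolding AE_measure_pmf_iff f_split
    using integrable_bind_pmf_kernel[OF ip] integrable_bind_pmf_kernel[OF im] by simp
  have diff_int: "integrable p (\<lambda>x. (\<integral>y. fp y \<partial>K x) - (\<integral>y. fm y \<partial>K x))"
    using P(1) M(1) unfolding fp_def fm_def by auto
  then show "integrable p (\<lambda>x. \<integral>y. f y \<partial>K x)"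
    by (rule integrable_cong_AE_imp) (use inner in \<open>auto simp: AE_measure_pmf_iff\<close>)
  have "(\<integral>y. f y \<partial>bind_pmf p K) = (\<integral>y. fp y \<partial>bind_pmf p K) - (\<integral>y. fm y \<partial>bind_pmf p K)"
    unfolding f_split using ip im by (rule Bochner_Integration.integral_diff)
  also have "\<dots> = (\<integral>x. (\<integral>y. fp y \<partial>K x) - (\<integral>y. fm y \<partial>K x) \<partial>p)"
    using P M unfolding fp_def fm_def by (simp add: Bochner_Integration.integral_diff)
  also have "\<dots> = (\<integral>x. (\<integral>y. f y \<partial>K x) \<partial>p)"
    using inner by (intro integral_cong_AE) auto
  finally show "(\<integral>y. f y \<partial>bind_pmf p K) = (\<integral>x. (\<integral>y. f y \<partial>K x) \<partial>p)" .
qed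

lemma pmf_replicate_pmf:
  "pmf (replicate_pmf n p) xs = (if length xs = n then prod_list (map (pmf p) xs) else 0)"
proof (induction n arbitrary: xs)
  case 0 then show ?case by (cases xs) (auto simp: indicator_def)
next
  case (Suc n)
  have rep: "replicate_pmf (Suc n) p = bind_pmf p (\<lambda>x. map_pmf (Cons x) (replicate_pmf n p))"
    by (simp add: map_pmf_def)
  show ?case
  proof (cases xs)
    case Nil then show ?thesis by (simp add: rep pmf_eq_0_set_pmf)
  next
    case (Cons y ys)
    have "pmf (map_pmf (Cons x) (replicate_pmf n p)) (y # ys) = indicator {y} x * pmf (replicate_pmf n p) ys" for x
      by (cases "x = y") (auto simp: pmf_map_inj' intro!: pmf_map_outside)
    then have "pmf (replicate_pmf (Suc n) p) (y # ys) = pmf p y * pmf (replicate_pmf n p) ys"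
      unfolding rep pmf_bind by (simp add: measure_pmf_single)
    then show ?thesis using Suc.IH Cons by simp
  qed
qed

lemma emeasure_replicate_pmf_coordinatewise:
  "emeasure (replicate_pmf m D) {S. \<forall>i<m. S ! i \<in> C i} = (\<Prod>i<m. emeasure (measure_pmf D) (C i))"
proof (induction m arbitrary: C)
  case 0 then show ?case by (simp add: measure_pmf.emeasure_space_1[simplified])
next
  case (Suc m)
  have rep: "replicate_pmf (Suc m) D = bind_pmf D (\<lambda>x. map_pmf (Cons x) (replicate_pmf m D))"
    by (simp add: map_pmf_def)
  have "Cons x -` {S. \<forall>i<Suc m. S ! i \<in> C i}
      = (if x \<in> C 0 then {S. \<forall>i<m. S ! i \<in> C (Suc i)} else {})" for x
    by (auto simp: All_less_Suc2)
  then have "emeasure (replicate_pmf (Suc m) D) {S. \<forall>i<Suc m. S ! i \<in> C i}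
      = (\<integral>\<^sup>+x. emeasure (replicate_pmf m D) {S. \<forall>i<m. S ! i \<in> C (Suc i)} * indicator (C 0) x \<partial>D)"
    unfolding rep emeasure_bind_pmf emeasure_map_pmf
    by (intro nn_integral_cong) (auto simp: indicator_def)
  also have "\<dots> = emeasure (replicate_pmf m D) {S. \<forall>i<m. S ! i \<in> C (Suc i)} * emeasure D (C 0)"
    by (rule nn_integral_cmult_indicator) simp
  also have "\<dots> = (\<Prod>i<Suc m. emeasure (measure_pmf D) (C i))"
    unfolding prod.lessThan_Suc_shift using Suc.IH[of "\<lambda>i. C (Suc i)"] by (simp add: mult.commute)
  finally show ?case .
qed

lemma measure_replicate_pmf_select_le:
  assumes xs: "distinct xs" "set xs \<subseteq> {..<m}" "length xs = t"
  shows "measure (replicate_pmf m D) {S. \<forall>j<t. S ! (xs ! j) \<in> B j} \<le> (\<Prod>j<t. measure D (B j))"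
proof -
  define C where "C = (\<lambda>i. {s. \<forall>j<t. xs ! j = i \<longrightarrow> s \<in> B j})"
  have CB: "C (xs ! j) = B j" if "j < t" for j
  proof -
    have "xs ! j' = xs ! j \<longleftrightarrow> j' = j" if "j' < t" for j'
      using xs that \<open>j < t\<close> by (simp add: nth_eq_iff_index_eq)
    then show ?thesis unfolding C_def using that by auto
  qed
  have C_UNIV: "C i = UNIV" if "i \<notin> set xs" for i
    unfolding C_def using that xs by (auto simp: in_set_conv_nth)
  have reindex: "set xs = (\<lambda>j. xs ! j) ` {..<t}" "inj_on (\<lambda>j. xs ! j) {..<t}"
    using xs by (auto simp: in_set_conv_nth image_iff intro!: inj_onI simp: nth_eq_iff_index_eq)
  have "emeasure (replicate_pmf m D) {S. \<forall>j<t. S ! (xs ! j) \<in> B j}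
      \<le> emeasure (replicate_pmf m D) {S. \<forall>i<m. S ! i \<in> C i}"
    unfolding C_def by (rule emeasure_mono) auto
  also have "\<dots> = (\<Prod>i<m. emeasure (measure_pmf D) (C i))"
    by (rule emeasure_replicate_pmf_coordinatewise)
  also have "\<dots> = (\<Prod>i\<in>set xs. emeasure (measure_pmf D) (C i))"
    by (rule prod.mono_neutral_right)
       (use xs C_UNIV in \<open>auto simp: measure_pmf.emeasure_space_1[simplified]\<close>)
  also have "\<dots> = (\<Prod>j<t. emeasure (measure_pmf D) (B j))"
    using CB by (simp add: reindex prod.reindex)
  also have "\<dots> = ennreal (\<Prod>j<t. measure D (B j))"
    by (simp add: measure_pmf.emeasure_eq_measure prod_ennreal)
  finally show ?thesis by (simp add: measure_pmf.emeasure_eq_measure prod_nonneg)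
qed

lemma pmf_map_pmf_unique_preimage:
  assumes "\<And>x. x \<in> set_pmf M \<Longrightarrow> f x = y \<longleftrightarrow> x = x0"
  shows "pmf (map_pmf f M) y = pmf M x0"
proof -
  have "pmf (map_pmf f M) y = measure M (f -` {y} \<inter> set_pmf M)"
    by (simp add: pmf_map measure_Int_set_pmf)
  also have "f -` {y} \<inter> set_pmf M = {x0} \<inter> set_pmf M" using assms by auto
  finally show ?thesis by (simp add: measure_Int_set_pmf measure_pmf_single)
qed

lemma measure_pmf_cong_set_pmf:
  assumes "\<And>x. x \<in> set_pmf M \<Longrightarrow> x \<in> S \<longleftrightarrow> x \<in> T"
  shows "measure M S = measure M T"
proof -
  have "S \<inter> set_pmf M = T \<inter> set_pmf M" using assms by auto
  then show ?thesis by (metis measure_Int_set_pmf)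
qed

lemma cond_pmf_cong_set_pmf:
  assumes eq: "\<And>x. x \<in> set_pmf P \<Longrightarrow> x \<in> S \<longleftrightarrow> x \<in> T" and ne: "set_pmf P \<inter> S \<noteq> {}"
  shows "cond_pmf P S = cond_pmf P T"
proof (rule pmf_eqI)
  fix x
  have ne': "set_pmf P \<inter> T \<noteq> {}" using eq ne by auto
  have "measure P S = measure P T" by (rule measure_pmf_cong_set_pmf) (use eq in auto)
  then show "pmf (cond_pmf P S) x = pmf (cond_pmf P T) x"
    unfolding pmf_cond[OF ne] pmf_cond[OF ne']
    using eq[of x] by (auto simp: set_pmf_iff)
qed

lemma pmf_bind_pmf_unique:
  assumes "\<And>v. v \<in> set_pmf P \<Longrightarrow> v \<noteq> v0 \<Longrightarrow> pmf (K v) x = 0"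
  shows "pmf (bind_pmf P K) x = pmf P v0 * pmf (K v0) x"
proof -
  have "pmf (bind_pmf P K) x = (\<integral>v. indicator {v0} v * pmf (K v0) x \<partial>P)"
    unfolding pmf_bind using assms
    by (intro integral_cong_AE) (auto simp: AE_measure_pmf_iff indicator_def)
  then show ?thesis by (simp add: measure_pmf_single)
qed

lemma map_nth_upt_eq_take: "k \<le> length x \<Longrightarrow> map ((!) x) [0..<k] = take k x"
  by (intro nth_equalityI) auto

lemma map_nth_upt_eq_drop: "length w = n + k \<Longrightarrow> map ((!) w) [n..<n+k] = drop n w"
  by (intro nth_equalityI) auto

lemma prod_list_map_take: "n \<le> length w \<Longrightarrow> prod_list (map f (take n w)) = (\<Prod>j<n. f (w ! j))"
  by (subst prod.list_conv_set_nth) (simp add: atLeast0LessThan min_def)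

lemma tv_dist_nonneg: "0 \<le> tv_dist p q"
  and tv_dist_le_1: "tv_dist p q \<le> 1"
proof -
  have bound: "\<bar>measure_pmf.prob p A - measure_pmf.prob q A\<bar> \<le> 1" for A
  proof -
    have "0 \<le> measure_pmf.prob p A" "measure_pmf.prob p A \<le> 1"
      "0 \<le> measure_pmf.prob q A" "measure_pmf.prob q A \<le> 1" by auto
    then show ?thesis by linarith
  qed
  then have "bdd_above (range (\<lambda>A. \<bar>measure_pmf.prob p A - measure_pmf.prob q A\<bar>))"
    by (intro bdd_aboveI[where M=1]) auto
  then show "0 \<le> tv_dist p q" unfolding tv_dist_def
    by (rule cSUP_upper2[of _ _ "{}"]) auto
  show "tv_dist p q \<le> 1" unfolding tv_dist_def using bound by (intro cSUP_least) auto
qed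

section \<open>Uniformly random distinct positions\<close>

definition distinct_idx :: "nat \<Rightarrow> nat \<Rightarrow> nat list set" where
  "distinct_idx m t = {xs. distinct xs \<and> length xs = t \<and> set xs \<subseteq> {..<m}}"

definition uniform_idx :: "nat \<Rightarrow> nat \<Rightarrow> nat list pmf" where
  "uniform_idx m t = pmf_of_set (distinct_idx m t)"

lemma finite_distinct_idx: "finite (distinct_idx m t)"
proof -
  have "distinct_idx m t \<subseteq> {xs. set xs \<subseteq> {..<m} \<and> length xs = t}" unfolding distinct_idx_def by auto
  then show ?thesis using finite_lists_length_eq[of "{..<m}" t] by (rule finite_subset) simp
qed

lemma distinct_idx_nonempty: "t \<le> m \<Longrightarrow> distinct_idx m t \<noteq> {}"
  unfolding distinct_idx_def by (rule ccontr) (use nothing in \<open>auto dest!: spec[of _ "[0..<t]"]\<close>)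

lemma set_uniform_idx: "t \<le> m \<Longrightarrow> set_pmf (uniform_idx m t) = distinct_idx m t"
  unfolding uniform_idx_def using finite_distinct_idx distinct_idx_nonempty by simp

definition idx_extensions :: "nat \<Rightarrow> nat \<Rightarrow> nat list \<Rightarrow> nat list set" where
  "idx_extensions m d js = {rs. length rs = d \<and> distinct rs \<and> set rs \<subseteq> {..<m} - set js}"

lemma finite_idx_extensions: "finite (idx_extensions m d js)"
proof -
  have "idx_extensions m d js \<subseteq> {xs. set xs \<subseteq> {..<m} \<and> length xs = d}"
    unfolding idx_extensions_def by auto
  then show ?thesis using finite_lists_length_eq[of "{..<m}" d] by (rule finite_subset) simp
qed

lemma card_idx_extensions:
  assumes "js \<in> distinct_idx m t" and "t + d \<le> m"
  shows "card (idx_extensions m d js) = \<Prod>{m - t - d + 1 .. m - t}"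
proof -
  have "card ({..<m} - set js) = m - t"
    using assms unfolding distinct_idx_def by (auto simp: card_Diff_subset distinct_card)
  then show ?thesis unfolding idx_extensions_def using assms(2) by (subst card_lists_distinct_length_eq) auto
qed

lemma distinct_idx_append_decomp:
  assumes "t \<le> L"
  shows "distinct_idx m L = (\<Union>js\<in>distinct_idx m t. (\<lambda>rs. js @ rs) ` idx_extensions m (L - t) js)"
proof (intro set_eqI iffI)
  fix xs assume "xs \<in> distinct_idx m L"
  then have "take t xs \<in> distinct_idx m t" "drop t xs \<in> idx_extensions m (L - t) (take t xs)"
    unfolding distinct_idx_def idx_extensions_def using assms
    by (auto dest: in_set_takeD in_set_dropD simp: set_take_disj_set_drop_if_distinct)
       (metis append_take_drop_id distinct_append disjoint_iff)
  then show "xs \<in> (\<Union>js\<in>distinct_idx m t. (\<lambda>rs. js @ rs) ` idx_extensions m (L - t) js)"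
    by (intro UN_I[of "take t xs"]) (auto intro!: image_eqI[of _ _ "drop t xs"])
qed (use assms in \<open>auto simp: idx_extensions_def distinct_idx_def\<close>)

text \<open>A uniform distinct list of length \<open>L\<close> is drawn by extending a uniform distinct
  list of length \<open>t\<close> uniformly, since the number of extensions does not depend on the prefix.\<close>
lemma uniform_idx_take:
  assumes "t \<le> L" "L \<le> m"
  shows "map_pmf (take t) (uniform_idx m L) = uniform_idx m t"
proof -
  define F where "F js = (\<lambda>rs. js @ rs) ` idx_extensions m (L - t) js" for js
  have card_F: "card (F js) = \<Prod>{m - t - (L - t) + 1 .. m - t}" if "js \<in> distinct_idx m t" for js
    unfolding F_def using card_idx_extensions[OF that] assms by (subst card_image) (auto intro: inj_onI)
  have F_nonempty: "F js \<noteq> {}" if "js \<in> distinct_idx m t" for js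
  proof -
    have "0 < card (F js)" using card_F[OF that] assms by (auto intro!: prod_pos)
    then show ?thesis by auto
  qed
  have finite_F: "finite (F js)" for js unfolding F_def using finite_idx_extensions by simp
  have UN: "distinct_idx m L = (\<Union>js\<in>distinct_idx m t. F js)"
    unfolding F_def by (rule distinct_idx_append_decomp[OF assms(1)])
  have "disjoint_family_on F (distinct_idx m t)"
    unfolding disjoint_family_on_def F_def distinct_idx_def by auto
  then have "uniform_idx m L = do {js \<leftarrow> uniform_idx m t; pmf_of_set (F js)}"
    unfolding uniform_idx_def UN
    using finite_distinct_idx distinct_idx_nonempty assms card_F F_nonempty finite_F
    by (intro pmf_of_set_UN) auto
  also have "map_pmf (take t) \<dots> = do {js \<leftarrow> uniform_idx m t; return_pmf js}"
    unfolding map_bind_pmf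
  proof (intro bind_pmf_cong refl)
    fix js assume "js \<in> set_pmf (uniform_idx m t)"
    then have js: "js \<in> distinct_idx m t" using set_uniform_idx assms by auto
    have "map_pmf (take t) (pmf_of_set (F js)) = map_pmf (\<lambda>_. js) (pmf_of_set (F js))"
      using finite_F F_nonempty[OF js] js
      by (intro map_pmf_cong refl) (auto simp: F_def distinct_idx_def)
    then show "map_pmf (take t) (pmf_of_set (F js)) = return_pmf js" by (simp add: map_pmf_const)
  qed
  finally show ?thesis by (simp add: bind_return_pmf')
qed

lemma uniform_idx_permute:
  assumes qs: "distinct qs" "set qs = {..<L}" and "L \<le> m"
  shows "map_pmf (\<lambda>xs. map ((!) xs) qs) (uniform_idx m L) = uniform_idx m L"
proof -
  let ?f = "\<lambda>xs. map ((!) xs) qs"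
  have "length qs = L" using qs by (metis distinct_card card_lessThan)
  have inj: "inj_on ?f (distinct_idx m L)"
  proof (rule inj_onI)
    fix xs ys assume a: "xs \<in> distinct_idx m L" "ys \<in> distinct_idx m L" "?f xs = ?f ys"
    have "\<forall>i<L. xs ! i = ys ! i"
    proof (intro allI impI)
      fix i assume "i < L"
      then obtain j where "j < length qs" "qs ! j = i" using qs by (metis in_set_conv_nth lessThan_iff)
      then show "xs ! i = ys ! i" using a(3) by (metis nth_map)
    qed
    then show "xs = ys" using a unfolding distinct_idx_def by (auto intro: nth_equalityI)
  qed
  have "?f ` distinct_idx m L \<subseteq> distinct_idx m L"
  proof
    fix y assume "y \<in> ?f ` distinct_idx m L"
    then obtain xs where xs: "xs \<in> distinct_idx m L" "y = ?f xs" by auto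
    have "inj_on ((!) xs) (set qs)" using xs(1) qs unfolding distinct_idx_def
      by (auto intro!: inj_onI simp: nth_eq_iff_index_eq)
    then have "distinct y" using xs qs by (simp add: distinct_map)
    moreover have "set y \<subseteq> {..<m}" using xs qs unfolding distinct_idx_def by (auto dest!: nth_mem intro: subsetD)
    ultimately show "y \<in> distinct_idx m L" using xs \<open>length qs = L\<close> unfolding distinct_idx_def by simp
  qed
  then have "?f ` distinct_idx m L = distinct_idx m L"
    by (rule endo_inj_surj[OF finite_distinct_idx _ inj])
  then show ?thesis unfolding uniform_idx_def
    using map_pmf_of_set_inj[OF inj distinct_idx_nonempty[OF \<open>L \<le> m\<close>] finite_distinct_idx] by simp
qed

lemma uniform_idx_select:
  assumes ps: "distinct ps" "set ps \<subseteq> {..<L}" and "L \<le> m"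
  shows "map_pmf (\<lambda>xs. map ((!) xs) ps) (uniform_idx m L) = uniform_idx m (length ps)"
proof -
  define qs where "qs = ps @ filter (\<lambda>i. i \<notin> set ps) [0..<L]"
  have qs: "distinct qs" "set qs = {..<L}" unfolding qs_def using ps by auto
  have "length ps \<le> L" using ps by (metis card_lessThan card_mono distinct_card finite_lessThan)
  have select_eq: "map ((!) xs) ps = take (length ps) (map ((!) xs) qs)" for xs
    unfolding qs_def by auto
  have "map_pmf (\<lambda>xs. map ((!) xs) ps) (uniform_idx m L)
      = map_pmf (take (length ps)) (map_pmf (\<lambda>xs. map ((!) xs) qs) (uniform_idx m L))"
    by (simp only: map_pmf_comp select_eq)
  then show ?thesis
    using uniform_idx_permute[OF qs \<open>L \<le> m\<close>] uniform_idx_take[OF \<open>length ps \<le> L\<close> \<open>L \<le> m\<close>]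
    by simp
qed

definition coord_sample :: "nat \<Rightarrow> 'a list pmf \<Rightarrow> nat \<Rightarrow> 'a list pmf" where
  "coord_sample m \<mu> t = bind_pmf \<mu> (\<lambda>Y. map_pmf (\<lambda>xs. map ((!) Y) xs) (uniform_idx m t))"

lemma length_coord_sample: "t \<le> m \<Longrightarrow> w \<in> set_pmf (coord_sample m \<mu> t) \<Longrightarrow> length w = t"
  unfolding coord_sample_def using set_uniform_idx by (auto simp: distinct_idx_def)

lemma coord_sample_select:
  assumes ps: "distinct ps" "set ps \<subseteq> {..<L}" and "L \<le> m"
  shows "map_pmf (\<lambda>w. map ((!) w) ps) (coord_sample m \<mu> L) = coord_sample m \<mu> (length ps)"
proof -
  have "map_pmf (\<lambda>w. map ((!) w) ps) (map_pmf (\<lambda>xs. map ((!) Y) xs) (uniform_idx m L))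
      = map_pmf (\<lambda>xs. map ((!) Y) xs) (map_pmf (\<lambda>xs. map ((!) xs) ps) (uniform_idx m L))" for Y
    unfolding map_pmf_comp
  proof (intro map_pmf_cong refl)
    fix xs assume "xs \<in> set_pmf (uniform_idx m L)"
    then have "length xs = L" using set_uniform_idx[OF \<open>L \<le> m\<close>] unfolding distinct_idx_def by auto
    then show "map ((!) (map ((!) Y) xs)) ps = map ((!) Y) (map ((!) xs) ps)"
      using ps by auto
  qed
  then show ?thesis
    unfolding coord_sample_def map_bind_pmf uniform_idx_select[OF ps \<open>L \<le> m\<close>]
    by (intro bind_pmf_cong) auto
qed

lemma grouped_eq_coord_sample:
  "grouped m n k \<mu> = map_pmf (\<lambda>w. (take n w, drop n w)) (coord_sample m \<mu> (n+k))"
  unfolding grouped_def coord_sample_def uniform_idx_def distinct_idx_def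
  by (simp add: map_bind_pmf map_pmf_def bind_assoc_pmf bind_return_pmf take_map drop_map)

section \<open>Discrete convexity\<close>

definition convexity_defect :: "(nat \<Rightarrow> real) \<Rightarrow> nat \<Rightarrow> nat \<Rightarrow> real" where
  "convexity_defect h n k = h (n+k) - h k - real n * (h (Suc k) - h k)"

lemma convex_increment_mono:
  fixes h :: "nat \<Rightarrow> real"
  assumes convex: "\<And>t. Suc (Suc t) \<le> m \<Longrightarrow> 2 * h (Suc t) \<le> h t + h (Suc (Suc t))"
    and "i \<le> j" "Suc j \<le> m"
  shows "h (Suc i) - h i \<le> h (Suc j) - h j"
  using assms(2,3)
proof (induction j rule: dec_induct)
  case (step j)
  then show ?case using convex[of j] by simp
qed simp

lemma sum_convexity_defect_le:
  fixes h :: "nat \<Rightarrow> real"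
  assumes convex: "\<And>t. Suc (Suc t) \<le> m \<Longrightarrow> 2 * h (Suc t) \<le> h t + h (Suc (Suc t))"
    and n: "1 \<le> n" and Kn: "K + n \<le> m"
  defines "T \<equiv> K + n - 1"
  shows "(\<Sum>k\<le>K. convexity_defect h n k)
    \<le> real n * (real n - 1) / 2 * ((h (Suc T) - h T) - (h 1 - h 0))"
proof -
  define D where "D t = h (Suc t) - h t" for t
  have mono: "D i \<le> D j" if "i \<le> j" "j \<le> T" for i j
    unfolding D_def using convex_increment_mono[where h=h and m=m, OF convex that(1)] that Kn n unfolding T_def by simp
  have telescope: "h (a + b) - h a = (\<Sum>i<b. D (a + i))" for a b
    by (induction b) (auto simp: D_def)
  have defect: "convexity_defect h n k = (\<Sum>j<n. D (k + j) - D k)" for k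
    unfolding convexity_defect_def using telescope[of k n] by (simp add: sum_subtractf D_def add.commute)
  define S where "S j = (\<Sum>k\<le>K. D (k + j) - D k)" for j
  have S_step: "S (Suc j) = S j + (D (K + Suc j) - D j)" for j
  proof -
    have "(\<Sum>k\<le>K'. D (Suc k + j) - D (k + j)) = D (Suc K' + j) - D j" for K'
      by (induction K') auto
    then have "S (Suc j) - S j = D (Suc K + j) - D j"
      unfolding S_def by (simp add: sum_subtractf[symmetric] algebra_simps)
    then show ?thesis by simp
  qed
  have S_le: "S j \<le> real j * (D T - D 0)" if "j < n" for j
    using that
  proof (induction j)
    case (Suc j)
    have "D (K + Suc j) \<le> D T" "D 0 \<le> D j" using Suc.prems by (auto intro!: mono simp: T_def)
    then show ?case using Suc S_step[of j] by (simp add: algebra_simps)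
  qed (simp add: S_def)
  have "(\<Sum>k\<le>K. convexity_defect h n k) = (\<Sum>j<n. S j)"
    unfolding defect S_def by (rule sum.swap)
  also have "\<dots> \<le> (\<Sum>j<n. real j * (D T - D 0))" using S_le by (intro sum_mono) auto
  also have "\<dots> = (\<Sum>j<n. real j) * (D T - D 0)" by (simp add: sum_distrib_right)
  also have "(\<Sum>j<n. real j) = real n * (real n - 1) / 2"
    by (induction n) (simp_all add: field_simps)
  finally show ?thesis by (simp add: D_def)
qed

text \<open>The increments of \<open>h\<close> grow by at most \<open>2c\<close> over the first half of \<open>[0, m]\<close>:
  otherwise the remaining increments alone would push \<open>h m\<close> above \<open>m h 1 + m c \<ge> 0\<close>.\<close>
lemma convex_increment_growth_le:
  fixes h :: "nat \<Rightarrow> real"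
  assumes h0: "h 0 = 0" and h_nonpos: "h m \<le> 0" and h1: "- c \<le> h 1" and c: "0 \<le> c"
    and convex: "\<And>t. Suc (Suc t) \<le> m \<Longrightarrow> 2 * h (Suc t) \<le> h t + h (Suc (Suc t))"
    and T: "2 * Suc T \<le> m"
  shows "(h (Suc T) - h T) - (h 1 - h 0) \<le> 2 * c"
proof -
  define D where "D t = h (Suc t) - h t" for t
  define F where "F = D T - D 0"
  have mono: "D i \<le> D j" if "i \<le> j" "Suc j \<le> m" for i j
    unfolding D_def using convex_increment_mono[where h=h and m=m, OF convex that] .
  have "(\<Sum>t<m. D t) = h m - h 0" unfolding D_def by (rule sum_lessThan_telescope)
  then have "(\<Sum>t<m. D t - D 0) = h m - real m * h 1"
    using h0 by (simp add: sum_subtractf D_def)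
  moreover have "(\<Sum>t<m. D t - D 0) = (\<Sum>t\<in>{0..<T}. D t - D 0) + (\<Sum>t\<in>{T..<m}. D t - D 0)"
    using T by (simp add: atLeast0LessThan[symmetric] sum.atLeastLessThan_concat)
  moreover have "(\<Sum>t\<in>{0..<T}. D t - D 0) \<ge> 0"
    using T mono[of 0] by (intro sum_nonneg) auto
  moreover have "(\<Sum>t\<in>{T..<m}. D t - D 0) \<ge> (\<Sum>t\<in>{T..<m}. F)"
    unfolding F_def using mono by (intro sum_mono) auto
  ultimately have "real (m - T) * F \<le> h m - real m * h 1" by simp
  also have "\<dots> \<le> real m * c" using h_nonpos h1 mult_left_mono[OF h1, of "real m"] by simp
  finally have mF: "real (m - T) * F \<le> real m * c" .
  have "real m * c \<le> (2 * real (m - T)) * c" using T c by (intro mult_right_mono) auto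
  then have "real (m - T) * F \<le> real (m - T) * (2 * c)" using mF by simp
  moreover have "0 < real (m - T)" using T by simp
  ultimately show ?thesis unfolding F_def D_def by simp
qed

text \<open>Averaging over \<open>k \<le> K\<close>: the sum of the defects telescopes to at most \<open>n\<^sup>2 c\<close>.\<close>
lemma exists_small_convexity_defect:
  fixes h :: "nat \<Rightarrow> real"
  assumes h0: "h 0 = 0" and h_nonpos: "h m \<le> 0" and h1: "- c \<le> h 1" and c: "0 \<le> c"
    and convex: "\<And>t. Suc (Suc t) \<le> m \<Longrightarrow> 2 * h (Suc t) \<le> h t + h (Suc (Suc t))"
    and n: "1 \<le> n" and K: "1 \<le> K" and m: "2 * (n + K) \<le> m"
  shows "\<exists>k\<le>K. convexity_defect h n k \<le> real n ^ 2 * c / real K"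
proof (rule ccontr)
  assume "\<not> ?thesis"
  then have small: "real n ^ 2 * c / real K < convexity_defect h n k" if "k \<le> K" for k
    using that by force
  define T where "T = K + n - 1"
  have "(\<Sum>k\<le>K. convexity_defect h n k) \<le> real n * (real n - 1) / 2 * ((h (Suc T) - h T) - (h 1 - h 0))"
    unfolding T_def using m n by (intro sum_convexity_defect_le[where h=h and m=m, OF convex]) auto
  also have "\<dots> \<le> real n * (real n - 1) / 2 * (2 * c)"
    using n m unfolding T_def
    by (intro mult_left_mono convex_increment_growth_le[where h=h and m=m, OF h0 h_nonpos h1 c convex]) auto
  also have "\<dots> \<le> real n ^ 2 * c" using c by (simp add: power2_eq_square algebra_simps)
  also have "\<dots> \<le> real (Suc K) * (real n ^ 2 * c / real K)"
    using K c by (simp add: field_simps)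
  also have "\<dots> = (\<Sum>k\<le>K. real n ^ 2 * c / real K)" by simp
  also have "\<dots> < (\<Sum>k\<le>K. convexity_defect h n k)" using small by (intro sum_strict_mono) auto
  finally show False by simp
qed

section \<open>Exchangeable families dominated by a product measure\<close>

text \<open>\<open>A t\<close> models the values at \<open>t\<close> distinct random positions of a sample: any \<open>p\<close>
  distinct positions of \<open>A L\<close> are jointly distributed as \<open>A p\<close>, and every \<open>A t\<close> is
  dominated by the (unnormalized) product measure \<open>(r Q)\<^sup>t\<close>.\<close>
locale exchangeable_family =
  fixes A :: "nat \<Rightarrow> 'a list pmf" and m :: nat and r :: real and Q :: "'a pmf"
  assumes length_sample: "\<And>t w. t \<le> m \<Longrightarrow> w \<in> set_pmf (A t) \<Longrightarrow> length w = t"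
    and select: "\<And>ps L. distinct ps \<Longrightarrow> set ps \<subseteq> {..<L} \<Longrightarrow> L \<le> m \<Longrightarrow>
        map_pmf (\<lambda>w. map ((!) w) ps) (A L) = A (length ps)"
    and dominated: "\<And>t w. t \<le> m \<Longrightarrow> pmf (A t) w \<le> prod_list (map (\<lambda>x. r * pmf Q x) w)"
    and r_pos: "r > 0"
begin

definition weight :: "'a list \<Rightarrow> real" where
  "weight w = prod_list (map (\<lambda>x. r * pmf Q x) w)"

definition log_ratio :: "nat \<Rightarrow> 'a list \<Rightarrow> real" where
  "log_ratio t w = ln (pmf (A t) w / weight w)"

text \<open>\<open>rel_entropy t = KL(A t \<parallel> Q\<^sup>t) - t ln r\<close>.\<close>
definition rel_entropy :: "nat \<Rightarrow> real" where
  "rel_entropy t = (\<integral>w. log_ratio t w \<partial>A t)"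

lemma A_0: "A 0 = return_pmf []"
  using select[of "[]" 0] by (simp add: map_pmf_const)

lemma weight_Nil [simp]: "weight [] = 1"
  by (simp add: weight_def)

lemma weight_Cons [simp]: "weight (x # w) = r * pmf Q x * weight w"
  by (simp add: weight_def)

lemma weight_append: "weight (v @ w) = weight v * weight w"
  by (simp add: weight_def)

lemma weight_eq_replicate_pmf: "weight w = r ^ length w * pmf (replicate_pmf (length w) Q) w"
proof -
  have "weight w = r ^ length w * prod_list (map (pmf Q) w)"
    by (induction w) (simp_all add: weight_def)
  then show ?thesis by (simp add: pmf_replicate_pmf)
qed

lemma support_pos:
  assumes "t \<le> m" "w \<in> set_pmf (A t)"
  shows "0 < pmf (A t) w" and "pmf (A t) w \<le> weight w" and "0 < weight w"
proof -
  show "0 < pmf (A t) w" using assms(2) by (simp add: pmf_positive)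
  moreover show "pmf (A t) w \<le> weight w" unfolding weight_def by (rule dominated[OF assms(1)])
  ultimately show "0 < weight w" by linarith
qed

lemma select_in_support:
  assumes "w \<in> set_pmf (A L)" "distinct ps" "set ps \<subseteq> {..<L}" "L \<le> m"
  shows "map ((!) w) ps \<in> set_pmf (A (length ps))"
  using assms(1) select[OF assms(2-4), symmetric] by (metis imageI set_map_pmf)

lemma log_ratio_eq:
  assumes "t \<le> m" "w \<in> set_pmf (A t)"
  shows "log_ratio t w = ln (pmf (A t) w) - ln (weight w)"
  using support_pos[OF assms] unfolding log_ratio_def by (simp add: ln_div)

lemma log_ratio_nonpos:
  assumes "t \<le> m" "w \<in> set_pmf (A t)"
  shows "log_ratio t w \<le> 0"
  using support_pos[OF assms] unfolding log_ratio_def by (simp add: ln_div)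

text \<open>Integrability: \<open>|log_ratio t w| \<le> weight w / pmf (A t) w\<close>, whose \<open>A t\<close>-integral is
  the total mass \<open>r\<^sup>t\<close> of the dominating measure.\<close>
lemma integrable_log_ratio:
  assumes t: "t \<le> m"
  shows "integrable (A t) (log_ratio t)"
proof -
  have bound: "norm (log_ratio t w) \<le> weight w / pmf (A t) w" if w: "w \<in> set_pmf (A t)" for w
  proof -
    note pos = support_pos[OF t w]
    have "- log_ratio t w = ln (weight w / pmf (A t) w)"
      unfolding log_ratio_def using pos by (simp add: ln_div)
    also have "\<dots> \<le> weight w / pmf (A t) w - 1" using pos by (intro ln_le_minus_one) simp
    finally show ?thesis using log_ratio_nonpos[OF t w] by simp
  qed
  have "(\<integral>\<^sup>+w. norm (log_ratio t w) \<partial>A t) \<le> (\<integral>\<^sup>+w. weight w / pmf (A t) w \<partial>A t)"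
    using bound by (intro nn_integral_mono_AE) (auto simp: AE_measure_pmf_iff intro!: ennreal_leI)
  also have "\<dots> = (\<integral>\<^sup>+w. ennreal (pmf (A t) w) * ennreal (weight w / pmf (A t) w) \<partial>count_space UNIV)"
    by (simp add: nn_integral_measure_pmf)
  also have "\<dots> \<le> (\<integral>\<^sup>+w. ennreal (r ^ t) * ennreal (pmf (replicate_pmf t Q) w) \<partial>count_space UNIV)"
  proof (intro nn_integral_mono)
    fix w
    show "ennreal (pmf (A t) w) * ennreal (weight w / pmf (A t) w)
        \<le> ennreal (r ^ t) * ennreal (pmf (replicate_pmf t Q) w)"
    proof (cases "w \<in> set_pmf (A t)")
      case True
      note pos = support_pos[OF t True]
      then have "pmf (A t) w * (weight w / pmf (A t) w) = r ^ t * pmf (replicate_pmf t Q) w"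
        using weight_eq_replicate_pmf[of w] length_sample[OF t True] by simp
      then show ?thesis using pos r_pos by (simp add: ennreal_mult[symmetric])
    qed (simp add: set_pmf_iff)
  qed
  also have "\<dots> = ennreal (r ^ t)"
    by (simp add: nn_integral_cmult nn_integral_pmf)
  finally show ?thesis by (simp add: integrable_iff_bounded order_le_less_trans)
qed

lemma rel_entropy_nonpos: "t \<le> m \<Longrightarrow> rel_entropy t \<le> 0"
proof -
  assume "t \<le> m"
  then have "(\<integral>w. log_ratio t w \<partial>A t) \<le> (\<integral>w. 0 \<partial>A t)"
    using log_ratio_nonpos integrable_log_ratio
    by (intro integral_mono_AE) (auto simp: AE_measure_pmf_iff)
  then show ?thesis unfolding rel_entropy_def by simp
qed

lemma rel_entropy_0: "rel_entropy 0 = 0"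
  unfolding rel_entropy_def log_ratio_def A_0 by (simp add: weight_def)

lemma rel_entropy_1_ge:
  assumes m: "1 \<le> m"
  shows "- ln r \<le> rel_entropy 1"
proof -
  define q where "q = map_pmf (\<lambda>x. [x]) Q"
  have q_eq: "pmf q w = weight w / r" if w: "w \<in> set_pmf (A 1)" for w
  proof -
    obtain x where x: "w = [x]" using length_sample[OF m w] by (cases w) auto
    have "pmf q [x] = pmf Q x" unfolding q_def by (rule pmf_map_inj') (auto intro: injI)
    then show ?thesis using x r_pos by (simp add: weight_def)
  qed
  have pos: "pmf q w > 0" if w: "w \<in> set_pmf (A 1)" for w
    using q_eq[OF w] support_pos(3)[OF m w] r_pos by simp
  have "ln (pmf (A 1) w / pmf q w) = log_ratio 1 w + ln r" if w: "w \<in> set_pmf (A 1)" for w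
    using q_eq[OF w] support_pos[OF m w] r_pos unfolding log_ratio_def by (simp add: ln_div ln_mult)
  then have ae: "AE w in A 1. ln (pmf (A 1) w / pmf q w) = log_ratio 1 w + ln r"
    by (simp add: AE_measure_pmf_iff)
  have int: "integrable (A 1) (\<lambda>w. ln (pmf (A 1) w / pmf q w))"
  proof (rule integrable_cong_AE_imp)
    show "integrable (A 1) (\<lambda>w. log_ratio 1 w + ln r)" using integrable_log_ratio[OF m] by simp
  qed (use ae in \<open>auto simp: AE_measure_pmf_iff\<close>)
  have "0 \<le> (\<integral>w. ln (pmf (A 1) w / pmf q w) \<partial>A 1)" by (rule gibbs_inequality_pmf[OF pos int])
  also have "\<dots> = (\<integral>w. log_ratio 1 w + ln r \<partial>A 1)" by (rule integral_cong_AE) (use ae in auto)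
  also have "\<dots> = rel_entropy 1 + ln r"
    unfolding rel_entropy_def using integrable_log_ratio[OF m] by simp
  finally show ?thesis by simp
qed

lemma
  assumes "distinct ps" "set ps \<subseteq> {..<L}" "L \<le> m"
  shows integrable_log_ratio_select: "integrable (A L) (\<lambda>w. log_ratio (length ps) (map ((!) w) ps))"
    and integral_log_ratio_select:
      "(\<integral>w. log_ratio (length ps) (map ((!) w) ps) \<partial>A L) = rel_entropy (length ps)"
proof -
  have "length ps \<le> m"
    using assms by (metis card_lessThan card_mono distinct_card finite_lessThan order_trans)
  then show "integrable (A L) (\<lambda>w. log_ratio (length ps) (map ((!) w) ps))"
    using integrable_log_ratio[of "length ps"] select[OF assms] by (metis integrable_map_pmf_eq)
  show "(\<integral>w. log_ratio (length ps) (map ((!) w) ps) \<partial>A L) = rel_entropy (length ps)"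
    unfolding rel_entropy_def select[OF assms, symmetric] by simp
qed

lemma measure_butlast_eq:
  assumes "t < m"
  shows "measure (A (Suc t)) {v. butlast v = w} = pmf (A t) w"
proof -
  have "measure (A (Suc t)) {v. butlast v = w} = measure (A (Suc t)) ((\<lambda>v. map ((!) v) [0..<t]) -` {w})"
  proof (rule measure_pmf_cong_set_pmf)
    fix v assume "v \<in> set_pmf (A (Suc t))"
    then have "length v = Suc t" using length_sample assms by simp
    then have "butlast v = map ((!) v) [0..<t]"
      by (intro nth_equalityI) (auto simp: nth_butlast)
    then show "v \<in> {v. butlast v = w} \<longleftrightarrow> v \<in> (\<lambda>v. map ((!) v) [0..<t]) -` {w}" by simp
  qed
  also have "\<dots> = pmf (map_pmf (\<lambda>v. map ((!) v) [0..<t]) (A (Suc t))) w" by (simp add: pmf_map)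
  also have "\<dots> = pmf (A t) w" using select[of "[0..<t]" "Suc t"] assms by (simp add: subset_eq)
  finally show ?thesis .
qed

definition next_coord :: "nat \<Rightarrow> 'a list \<Rightarrow> 'a pmf" where
  "next_coord t w = map_pmf last (cond_pmf (A (Suc t)) {v. butlast v = w})"

lemma pmf_next_coord:
  assumes t: "t < m" and w: "w \<in> set_pmf (A t)"
  shows "pmf (next_coord t w) b = pmf (A (Suc t)) (w @ [b]) / pmf (A t) w"
proof -
  have "measure (A (Suc t)) {v. butlast v = w} \<noteq> 0"
    using measure_butlast_eq[OF t, of w] support_pos(1)[OF _ w] t by simp
  then have ne: "set_pmf (A (Suc t)) \<inter> {v. butlast v = w} \<noteq> {}"
    by (auto simp: measure_pmf_zero_iff)
  have "pmf (next_coord t w) b = pmf (cond_pmf (A (Suc t)) {v. butlast v = w}) (w @ [b])"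
    unfolding next_coord_def
  proof (rule pmf_map_pmf_unique_preimage)
    fix v assume "v \<in> set_pmf (cond_pmf (A (Suc t)) {v. butlast v = w})"
    then have v: "v \<in> set_pmf (A (Suc t))" "butlast v = w" using set_cond_pmf[OF ne] by auto
    have "length v = Suc t" using length_sample[OF _ v(1)] t by simp
    then have "v = w @ [last v]" using v(2) by (metis append_butlast_last_id list.size(3) nat.distinct(1))
    then show "last v = b \<longleftrightarrow> v = w @ [b]" by auto
  qed
  also have "\<dots> = pmf (A (Suc t)) (w @ [b]) / pmf (A t) w"
    using pmf_cond[OF ne] measure_butlast_eq[OF t] by simp
  finally show ?thesis .
qed

text \<open>A Markov approximation of \<open>A (Suc (Suc t))\<close>: the last coordinate depends only on the first \<open>t\<close>.\<close>
definition markov_sample :: "nat \<Rightarrow> 'a list pmf" where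
  "markov_sample t = bind_pmf (A (Suc t)) (\<lambda>v. map_pmf (\<lambda>b. v @ [b]) (next_coord t (butlast v)))"

lemma pmf_markov_sample:
  assumes t: "Suc t < m" and x: "x \<in> set_pmf (A (Suc (Suc t)))"
  shows "pmf (markov_sample t) x
    = pmf (A (Suc t)) (take (Suc t) x) * (pmf (A (Suc t)) (take t x @ [x ! Suc t]) / pmf (A t) (take t x))"
proof -
  have len: "length x = Suc (Suc t)" using length_sample x t by simp
  define v where "v = take (Suc t) x"
  define b where "b = x ! Suc t"
  have x_eq: "x = v @ [b]" unfolding v_def b_def using len
    by (intro nth_equalityI) (auto simp: nth_append less_Suc_eq)
  have "map ((!) x) [0..<t] \<in> set_pmf (A (length [0..<t]))"
    by (rule select_in_support[OF x]) (use t in \<open>simp_all add: subset_eq\<close>)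
  then have w: "take t x \<in> set_pmf (A t)" using len map_nth_upt_eq_take[of t x] by simp
  have "pmf (markov_sample t) x = pmf (A (Suc t)) v * pmf (map_pmf (\<lambda>b. v @ [b]) (next_coord t (butlast v))) x"
    unfolding markov_sample_def
    by (rule pmf_bind_pmf_unique) (auto simp: x_eq intro!: pmf_map_outside)
  also have "pmf (map_pmf (\<lambda>b. v @ [b]) (next_coord t (butlast v))) x = pmf (next_coord t (take t x)) b"
    unfolding x_eq using len by (subst pmf_map_inj') (auto intro: inj_onI simp: v_def butlast_take)
  also have "\<dots> = pmf (A (Suc t)) (take t x @ [b]) / pmf (A t) (take t x)"
    by (rule pmf_next_coord) (use t w in auto)
  finally show ?thesis unfolding v_def b_def .
qed

lemma log_ratio_markov_sample:
  assumes t: "Suc (Suc t) \<le> m" and x: "x \<in> set_pmf (A (Suc (Suc t)))"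
  shows "pmf (markov_sample t) x > 0"
    and "ln (pmf (A (Suc (Suc t))) x / pmf (markov_sample t) x)
      = log_ratio (Suc (Suc t)) x - log_ratio (Suc t) (map ((!) x) [0..<Suc t])
        - log_ratio (Suc t) (map ((!) x) ([0..<t] @ [Suc t])) + log_ratio t (map ((!) x) [0..<t])"
proof -
  have len: "length x = Suc (Suc t)" using length_sample[OF t x] .
  have eq1: "map ((!) x) [0..<Suc t] = take (Suc t) x"
    and eq2: "map ((!) x) ([0..<t] @ [Suc t]) = take t x @ [x ! Suc t]"
    and eq0: "map ((!) x) [0..<t] = take t x"
    using len map_nth_upt_eq_take[of "Suc t" x] map_nth_upt_eq_take[of t x] by (simp_all del: upt_Suc)
  have s1: "take (Suc t) x \<in> set_pmf (A (Suc t))"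
    using select_in_support[OF x, of "[0..<Suc t]"] t eq1 by (auto simp: subset_eq)
  have s2: "take t x @ [x ! Suc t] \<in> set_pmf (A (Suc t))"
    using select_in_support[OF x, of "[0..<t] @ [Suc t]"] t eq2 by (auto simp: subset_eq)
  have s0: "take t x \<in> set_pmf (A t)"
    using select_in_support[OF x, of "[0..<t]"] t eq0 by (auto simp: subset_eq)
  have t': "Suc t \<le> m" "t \<le> m" using t by auto
  note P1 = support_pos[OF t'(1) s1] and P2 = support_pos[OF t'(1) s2]
    and P0 = support_pos[OF t'(2) s0] and Px = support_pos[OF t x]
  have mc: "pmf (markov_sample t) x
      = pmf (A (Suc t)) (take (Suc t) x) * (pmf (A (Suc t)) (take t x @ [x ! Suc t]) / pmf (A t) (take t x))"
    using pmf_markov_sample[OF _ x] t by simp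
  then show "pmf (markov_sample t) x > 0" using P1 P2 P0 by simp
  have "x = take t x @ [x ! t, x ! Suc t]" using len
    by (intro nth_equalityI) (auto simp: nth_append less_Suc_eq)
  then have "weight x = weight (take t x) * (r * pmf Q (x ! t)) * (r * pmf Q (x ! Suc t))"
    by (metis weight_append weight_Cons weight_Nil mult.assoc mult_1_right)
  moreover have "weight (take (Suc t) x) = weight (take t x) * (r * pmf Q (x ! t))"
    using len by (simp add: take_Suc_conv_app_nth weight_append)
  ultimately have "ln (weight x * weight (take t x))
      = ln (weight (take (Suc t) x) * weight (take t x @ [x ! Suc t]))"
    by (simp add: weight_append mult_ac)
  then have "ln (weight x) + ln (weight (take t x))
      = ln (weight (take (Suc t) x)) + ln (weight (take t x @ [x ! Suc t]))"
    using P1(3) P2(3) P0(3) Px(3) by (simp add: ln_mult)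
  moreover have "ln (pmf (A (Suc (Suc t))) x / pmf (markov_sample t) x)
      = ln (pmf (A (Suc (Suc t))) x) - ln (pmf (A (Suc t)) (take (Suc t) x))
        - ln (pmf (A (Suc t)) (take t x @ [x ! Suc t])) + ln (pmf (A t) (take t x))"
    unfolding mc using P1 P2 P0 Px by (simp add: ln_div ln_mult)
  ultimately show "ln (pmf (A (Suc (Suc t))) x / pmf (markov_sample t) x)
      = log_ratio (Suc (Suc t)) x - log_ratio (Suc t) (map ((!) x) [0..<Suc t])
        - log_ratio (Suc t) (map ((!) x) ([0..<t] @ [Suc t])) + log_ratio t (map ((!) x) [0..<t])"
    unfolding eq1 eq2 eq0
    using log_ratio_eq[OF t x] log_ratio_eq[OF t'(1) s1] log_ratio_eq[OF t'(1) s2] log_ratio_eq[OF t'(2) s0]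
    by simp
qed

text \<open>Convexity is Gibbs' inequality for \<open>A (Suc (Suc t))\<close> against its Markov approximation.\<close>
lemma rel_entropy_convex:
  assumes t: "Suc (Suc t) \<le> m"
  shows "2 * rel_entropy (Suc t) \<le> rel_entropy t + rel_entropy (Suc (Suc t))"
proof -
  let ?p = "A (Suc (Suc t))"
  define F where "F = (\<lambda>x. log_ratio (Suc (Suc t)) x - log_ratio (Suc t) (map ((!) x) [0..<Suc t])
    - log_ratio (Suc t) (map ((!) x) ([0..<t] @ [Suc t])) + log_ratio t (map ((!) x) [0..<t]))"
  have sel: "distinct [0..<Suc t]" "set [0..<Suc t] \<subseteq> {..<Suc (Suc t)}"
    "distinct ([0..<t] @ [Suc t])" "set ([0..<t] @ [Suc t]) \<subseteq> {..<Suc (Suc t)}"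
    "distinct [0..<t]" "set [0..<t] \<subseteq> {..<Suc (Suc t)}" by auto
  note I1 = integrable_log_ratio_select[OF sel(1,2) t] integral_log_ratio_select[OF sel(1,2) t]
    and I2 = integrable_log_ratio_select[OF sel(3,4) t] integral_log_ratio_select[OF sel(3,4) t]
    and I0 = integrable_log_ratio_select[OF sel(5,6) t] integral_log_ratio_select[OF sel(5,6) t]
  have int_F: "integrable ?p F"
    unfolding F_def using integrable_log_ratio[OF t] I1 I2 I0 by simp
  have "(\<integral>x. F x \<partial>?p) = rel_entropy (Suc (Suc t)) - rel_entropy (Suc t) - rel_entropy (Suc t) + rel_entropy t"
    unfolding F_def using integrable_log_ratio[OF t] I1 I2 I0 by (simp add: rel_entropy_def)
  moreover have ae: "AE x in ?p. ln (pmf ?p x / pmf (markov_sample t) x) = F x"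
    using log_ratio_markov_sample(2)[OF t] unfolding F_def by (simp add: AE_measure_pmf_iff)
  moreover have "integrable ?p (\<lambda>x. ln (pmf ?p x / pmf (markov_sample t) x))"
    by (rule integrable_cong_AE_imp[OF int_F]) (use ae in \<open>auto simp: AE_measure_pmf_iff\<close>)
  then have "0 \<le> (\<integral>x. ln (pmf ?p x / pmf (markov_sample t) x) \<partial>?p)"
    using log_ratio_markov_sample(1)[OF t] by (intro gibbs_inequality_pmf)
  ultimately show ?thesis using integral_cong_AE[OF _ _ ae] by simp
qed

lemma map_pmf_drop:
  assumes "n + k \<le> m"
  shows "map_pmf (drop n) (A (n+k)) = A k"
proof -
  have "map_pmf (drop n) (A (n+k)) = map_pmf (\<lambda>w. map ((!) w) [n..<n+k]) (A (n+k))"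
  proof (intro map_pmf_cong refl)
    fix w assume "w \<in> set_pmf (A (n+k))"
    then show "drop n w = map ((!) w) [n..<n+k]"
      using map_nth_upt_eq_drop[OF length_sample[OF assms]] by simp
  qed
  also have "\<dots> = A k" using select[of "[n..<n+k]" "n+k"] assms by (simp add: subset_eq)
  finally show ?thesis .
qed

lemma measure_drop_eq:
  assumes "n + k \<le> m"
  shows "measure (A (n+k)) {w. drop n w = c} = pmf (A k) c"
proof -
  have "measure (A (n+k)) {w. drop n w = c} = pmf (map_pmf (drop n) (A (n+k))) c"
    by (simp add: pmf_map vimage_def)
  then show ?thesis by (simp add: map_pmf_drop[OF assms])
qed

lemma measure_tl_eq:
  assumes "Suc k \<le> m"
  shows "measure (A (Suc k)) {v. tl v = c} = pmf (A k) c"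
  using measure_drop_eq[of 1 k c] assms by (simp add: drop_Suc)

lemma drop_in_support:
  assumes "n + k \<le> m" "w \<in> set_pmf (A (n+k))"
  shows "drop n w \<in> set_pmf (A k)"
proof -
  have "drop n w \<in> set_pmf (map_pmf (drop n) (A (n+k)))" using assms(2) by simp
  then show ?thesis by (simp add: map_pmf_drop[OF assms(1)])
qed

lemma nonempty_drop_fibre:
  assumes "n + k \<le> m" "c \<in> set_pmf (A k)"
  shows "set_pmf (A (n+k)) \<inter> {w. drop n w = c} \<noteq> {}"
  using assms(2) unfolding map_pmf_drop[OF assms(1), symmetric] by auto

text \<open>\<open>Group\<^sub>n\<close> and the single-coordinate goal distribution, in terms of \<open>A\<close>.\<close>
definition block_given :: "nat \<Rightarrow> nat \<Rightarrow> 'a list \<Rightarrow> 'a list pmf" where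
  "block_given n k c = map_pmf (take n) (cond_pmf (A (n+k)) {w. drop n w = c})"

definition single_given :: "nat \<Rightarrow> 'a list \<Rightarrow> 'a pmf" where
  "single_given k c = map_pmf hd (cond_pmf (A (Suc k)) {v. tl v = c})"

lemma pmf_block_given:
  assumes nk: "n + k \<le> m" and w: "w \<in> set_pmf (A (n+k))"
  shows "pmf (block_given n k (drop n w)) (take n w) = pmf (A (n+k)) w / pmf (A k) (drop n w)"
proof -
  have ne: "set_pmf (A (n+k)) \<inter> {v. drop n v = drop n w} \<noteq> {}" using w by auto
  have "pmf (block_given n k (drop n w)) (take n w) = pmf (cond_pmf (A (n+k)) {v. drop n v = drop n w}) w"
    unfolding block_given_def
  proof (rule pmf_map_pmf_unique_preimage)
    fix v assume "v \<in> set_pmf (cond_pmf (A (n+k)) {v. drop n v = drop n w})"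
    then have "drop n v = drop n w" using set_cond_pmf[OF ne] by auto
    then show "take n v = take n w \<longleftrightarrow> v = w" by (metis append_take_drop_id)
  qed
  also have "\<dots> = pmf (A (n+k)) w / pmf (A k) (drop n w)"
    unfolding pmf_cond[OF ne] measure_drop_eq[OF nk] by simp
  finally show ?thesis .
qed

lemma pmf_single_given:
  assumes k: "Suc k \<le> m" and c: "c \<in> set_pmf (A k)"
  shows "pmf (single_given k c) x = pmf (A (Suc k)) (x # c) / pmf (A k) c"
proof -
  have "measure (A (Suc k)) {v. tl v = c} \<noteq> 0"
    using measure_tl_eq[OF k] support_pos(1)[OF _ c] k by simp
  then have ne: "set_pmf (A (Suc k)) \<inter> {v. tl v = c} \<noteq> {}"
    by (auto simp: measure_pmf_zero_iff)
  have "pmf (single_given k c) x = pmf (cond_pmf (A (Suc k)) {v. tl v = c}) (x # c)"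
    unfolding single_given_def
  proof (rule pmf_map_pmf_unique_preimage)
    fix v assume "v \<in> set_pmf (cond_pmf (A (Suc k)) {v. tl v = c})"
    then have v: "v \<in> set_pmf (A (Suc k))" "tl v = c" using set_cond_pmf[OF ne] by auto
    then have "v = hd v # c" using length_sample[OF k v(1)] by (cases v) auto
    then show "hd v = x \<longleftrightarrow> v = x # c" by auto
  qed
  also have "\<dots> = pmf (A (Suc k)) (x # c) / pmf (A k) c"
    unfolding pmf_cond[OF ne] measure_tl_eq[OF k] by simp
  finally show ?thesis .
qed

lemma cond_pmf_split_sample:
  assumes nk: "n + k \<le> m" and c: "c \<in> set_pmf (A k)"
  shows "cond_pmf (map_pmf (\<lambda>w. (take n w, drop n w)) (A (n+k))) {y. snd y = c}
      = map_pmf (\<lambda>s. (s, c)) (block_given n k c)"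
proof -
  define f where "f = (\<lambda>w::'a list. (take n w, drop n w))"
  note ne = nonempty_drop_fibre[OF nk c]
  have pre: "f -` {y. snd y = c} = {w. drop n w = c}" unfolding f_def by auto
  have "cond_pmf (map_pmf f (A (n+k))) {y. snd y = c} = map_pmf f (cond_pmf (A (n+k)) {w. drop n w = c})"
    using cond_map_pmf[of "A (n+k)" f "{y. snd y = c}"] ne unfolding pre by simp
  also have "\<dots> = map_pmf (\<lambda>s. (s, c)) (block_given n k c)"
    unfolding block_given_def map_pmf_comp f_def
    by (intro map_pmf_cong refl) (use set_cond_pmf[OF ne] in auto)
  finally show ?thesis unfolding f_def .
qed

text \<open>Exchangeability: moving coordinate \<open>i\<close> of the block next to the core does not change the law.\<close>
lemma nth_block_given:
  assumes i: "i < n" and nk: "n + k \<le> m" and c: "c \<in> set_pmf (A k)"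
  shows "map_pmf (\<lambda>S. S ! i) (block_given n k c) = single_given k c"
proof -
  define g where "g = (\<lambda>w::'a list. map ((!) w) (i # [n..<n+k]))"
  have A_g: "map_pmf g (A (n+k)) = A (Suc k)"
    unfolding g_def using select[of "i # [n..<n+k]" "n+k"] i nk by (auto simp: subset_eq)
  have drop_eq: "drop n x = map ((!) x) [n..<n+k]" if "x \<in> set_pmf (A (n+k))" for x
    using map_nth_upt_eq_drop[OF length_sample[OF nk that]] by simp
  have pre: "g -` {v. tl v = c} = {w. map ((!) w) [n..<n+k] = c}" unfolding g_def by auto
  have ne: "set_pmf (A (n+k)) \<inter> g -` {v. tl v = c} \<noteq> {}"
    using nonempty_drop_fibre[OF nk c] drop_eq unfolding pre by auto
  have "cond_pmf (A (Suc k)) {v. tl v = c}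
      = map_pmf g (cond_pmf (A (n+k)) {w. map ((!) w) [n..<n+k] = c})"
    unfolding A_g[symmetric] cond_map_pmf[OF ne] pre ..
  also have "cond_pmf (A (n+k)) {w. map ((!) w) [n..<n+k] = c} = cond_pmf (A (n+k)) {w. drop n w = c}"
    by (rule cond_pmf_cong_set_pmf) (use drop_eq ne pre in auto)
  finally show ?thesis using i unfolding single_given_def block_given_def g_def by (simp add: map_pmf_comp)
qed

lemma uniform_coord_block_given:
  assumes n1: "1 \<le> n" and nk: "n + k \<le> m" and c: "c \<in> set_pmf (A k)"
  shows "bind_pmf (block_given n k c) (\<lambda>S. bind_pmf (pmf_of_set {..<length S}) (\<lambda>i. return_pmf (S ! i)))
    = single_given k c"
proof -
  have "length S = n" if "S \<in> set_pmf (block_given n k c)" for S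
    using that length_sample[OF nk] set_cond_pmf[OF nonempty_drop_fibre[OF nk c]]
    unfolding block_given_def by auto
  then have "bind_pmf (block_given n k c) (\<lambda>S. bind_pmf (pmf_of_set {..<length S}) (\<lambda>i. return_pmf (S ! i)))
     = bind_pmf (block_given n k c) (\<lambda>S. bind_pmf (pmf_of_set {..<n}) (\<lambda>i. return_pmf (S ! i)))"
    by (intro bind_pmf_cong) auto
  also have "\<dots> = bind_pmf (pmf_of_set {..<n}) (\<lambda>i. map_pmf (\<lambda>S. S ! i) (block_given n k c))"
    unfolding map_pmf_def by (rule bind_commute_pmf)
  also have "\<dots> = bind_pmf (pmf_of_set {..<n}) (\<lambda>i. single_given k c)"
    using n1 nth_block_given[OF _ nk c] by (intro bind_pmf_cong refl) (auto simp: lessThan_empty_iff)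
  finally show ?thesis by simp
qed

text \<open>On the support this is the log-likelihood ratio of the block against \<open>n\<close> independent
  copies of \<open>single_given\<close> (\<open>log_ratio_block_given\<close>), while every summand integrates to a
  value of \<open>rel_entropy\<close> by exchangeability.\<close>
definition block_log_ratio :: "nat \<Rightarrow> nat \<Rightarrow> 'a list \<Rightarrow> real" where
  "block_log_ratio n k w = log_ratio (n+k) w - log_ratio k (map ((!) w) [n..<n+k])
     - (\<Sum>j<n. log_ratio (Suc k) (map ((!) w) (j # [n..<n+k])) - log_ratio k (map ((!) w) [n..<n+k]))"

lemma
  assumes nk: "n + k \<le> m"
  shows integrable_block_log_ratio: "integrable (A (n+k)) (block_log_ratio n k)"
    and integral_block_log_ratio:
      "(\<integral>w. block_log_ratio n k w \<partial>A (n+k)) = convexity_defect rel_entropy n k"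
proof -
  have core: "distinct [n..<n+k]" "set [n..<n+k] \<subseteq> {..<n+k}" by auto
  have one: "distinct (j # [n..<n+k])" "set (j # [n..<n+k]) \<subseteq> {..<n+k}" if "j < n" for j
    using that by auto
  note I = integrable_log_ratio_select[OF core nk] integral_log_ratio_select[OF core nk]
    and Ij = integrable_log_ratio_select[OF one nk] integral_log_ratio_select[OF one nk]
  have int_j: "integrable (A (n+k))
      (\<lambda>w. log_ratio (Suc k) (map ((!) w) (j # [n..<n+k])) - log_ratio k (map ((!) w) [n..<n+k]))"
    if "j < n" for j
    using Ij(1)[OF that that] I(1) by simp
  have int_sum: "integrable (A (n+k)) (\<lambda>w. \<Sum>j<n. log_ratio (Suc k) (map ((!) w) (j # [n..<n+k]))
      - log_ratio k (map ((!) w) [n..<n+k]))"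
    using int_j by (intro Bochner_Integration.integrable_sum) auto
  have int_I: "integrable (A (n+k)) (\<lambda>w. log_ratio k (map ((!) w) [n..<n+k]))" using I(1) by simp
  show "integrable (A (n+k)) (block_log_ratio n k)"
    unfolding block_log_ratio_def using integrable_log_ratio[OF nk] int_I int_sum by simp
  have "(\<integral>w. (\<Sum>j<n. log_ratio (Suc k) (map ((!) w) (j # [n..<n+k]))
      - log_ratio k (map ((!) w) [n..<n+k])) \<partial>A (n+k)) = (\<Sum>j<n. rel_entropy (Suc k) - rel_entropy k)"
    using int_j Ij I by (subst Bochner_Integration.integral_sum) (auto intro!: sum.cong)
  then show "(\<integral>w. block_log_ratio n k w \<partial>A (n+k)) = convexity_defect rel_entropy n k"
    unfolding block_log_ratio_def convexity_defect_def
    using integrable_log_ratio[OF nk] int_I int_sum I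
    by (simp add: rel_entropy_def)
qed

lemma cons_drop_in_support:
  assumes nk: "n + k \<le> m" and w: "w \<in> set_pmf (A (n+k))" and j: "j < n"
  shows "w ! j # drop n w \<in> set_pmf (A (Suc k))"
proof -
  have "map ((!) w) (j # [n..<n+k]) = w ! j # drop n w"
    using map_nth_upt_eq_drop[OF length_sample[OF nk w]] by simp
  then show ?thesis using select_in_support[OF w, of "j # [n..<n+k]"] j nk by (auto simp: subset_eq)
qed

lemma pmf_replicate_single_given:
  assumes n1: "1 \<le> n" and nk: "n + k \<le> m" and w: "w \<in> set_pmf (A (n+k))"
  shows "pmf (replicate_pmf n (single_given k (drop n w))) (take n w)
    = (\<Prod>j<n. pmf (A (Suc k)) (w ! j # drop n w) / pmf (A k) (drop n w))"
  using length_sample[OF nk w] pmf_single_given[OF _ drop_in_support[OF nk w]] n1 nk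
  by (simp add: pmf_replicate_pmf prod_list_map_take)

text \<open>The reference weights cancel.\<close>
lemma block_log_ratio_eq:
  assumes n1: "1 \<le> n" and nk: "n + k \<le> m" and w: "w \<in> set_pmf (A (n+k))"
  defines "c \<equiv> drop n w"
  shows "block_log_ratio n k w = ln (pmf (A (n+k)) w) - ln (pmf (A k) c)
      - (\<Sum>j<n. ln (pmf (A (Suc k)) (w ! j # c)) - ln (pmf (A k) c))"
proof -
  have k: "k \<le> m" "Suc k \<le> m" using nk n1 by auto
  have core: "map ((!) w) [n..<n+k] = c"
    unfolding c_def using map_nth_upt_eq_drop[OF length_sample[OF nk w]] .
  then have one: "map ((!) w) (j # [n..<n+k]) = w ! j # c" for j by simp
  have c_supp: "c \<in> set_pmf (A k)" unfolding c_def by (rule drop_in_support[OF nk w])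
  note one_supp = cons_drop_in_support[OF nk w, folded c_def]
  note Pc = support_pos[OF k(1) c_supp] and Pj = support_pos[OF k(2) one_supp]
  have dens_pos: "r * pmf Q (w ! j) > 0" if "j < n" for j
    using Pj(3)[OF that] Pc(3) by (simp add: zero_less_mult_iff)
  have "weight w = weight (take n w) * weight c"
    unfolding c_def by (metis append_take_drop_id weight_append)
  also have "weight (take n w) = (\<Prod>j<n. r * pmf Q (w ! j))"
    unfolding weight_def using length_sample[OF nk w] by (simp add: prod_list_map_take)
  finally have "weight w = (\<Prod>j<n. r * pmf Q (w ! j)) * weight c" .
  moreover have "ln (\<Prod>j<n. r * pmf Q (w ! j)) = (\<Sum>j<n. ln (r * pmf Q (w ! j)))"
  proof (rule ln_prod)
    show "r * pmf Q (w ! j) \<noteq> 0" if "j \<in> {..<n}" for j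
      using dens_pos[of j] that by (metis lessThan_iff less_irrefl)
  qed simp
  moreover have "(\<Prod>j<n. r * pmf Q (w ! j)) > 0" using dens_pos by (intro prod_pos) auto
  ultimately have ln_w: "ln (weight w) = (\<Sum>j<n. ln (r * pmf Q (w ! j))) + ln (weight c)"
    using Pc(3) by (simp add: ln_mult_pos)
  have L_one: "log_ratio (Suc k) (w ! j # c)
      = ln (pmf (A (Suc k)) (w ! j # c)) - ln (r * pmf Q (w ! j)) - ln (weight c)" if "j < n" for j
    using log_ratio_eq[OF k(2) one_supp[OF that]] dens_pos[OF that] Pc(3) by (simp add: ln_mult_pos)
  have "block_log_ratio n k w
      = (ln (pmf (A (n+k)) w) - ((\<Sum>j<n. ln (r * pmf Q (w ! j))) + ln (weight c)))
        - (ln (pmf (A k) c) - ln (weight c))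
        - (\<Sum>j<n. (ln (pmf (A (Suc k)) (w ! j # c)) - ln (r * pmf Q (w ! j)) - ln (weight c))
             - (ln (pmf (A k) c) - ln (weight c)))"
    unfolding block_log_ratio_def one core log_ratio_eq[OF nk w] log_ratio_eq[OF k(1) c_supp] ln_w
    using L_one by (intro arg_cong2[where f = "(-)"] refl sum.cong) auto
  then show ?thesis by (simp add: sum_subtractf sum.distrib algebra_simps)
qed

lemma log_ratio_block_given:
  assumes n1: "1 \<le> n" and nk: "n + k \<le> m" and w: "w \<in> set_pmf (A (n+k))"
  defines "c \<equiv> drop n w"
  shows "pmf (block_given n k c) (take n w) > 0"
    and "pmf (replicate_pmf n (single_given k c)) (take n w) > 0"
    and "ln (pmf (block_given n k c) (take n w) / pmf (replicate_pmf n (single_given k c)) (take n w))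
      = block_log_ratio n k w"
proof -
  have k: "k \<le> m" "Suc k \<le> m" using nk n1 by auto
  have c_supp: "c \<in> set_pmf (A k)" unfolding c_def by (rule drop_in_support[OF nk w])
  note one_supp = cons_drop_in_support[OF nk w, folded c_def]
  note Pc = support_pos[OF k(1) c_supp] and Pw = support_pos[OF nk w]
    and Pj = support_pos[OF k(2) one_supp]
  note block = pmf_block_given[OF nk w, folded c_def]
    and prod = pmf_replicate_single_given[OF n1 nk w, folded c_def]
  show "pmf (block_given n k c) (take n w) > 0" using block Pw Pc by simp
  show prod_pos: "pmf (replicate_pmf n (single_given k c)) (take n w) > 0"
    using prod Pj Pc by (auto intro!: prod_pos)
  have "ln (\<Prod>j<n. pmf (A (Suc k)) (w ! j # c) / pmf (A k) c)
      = (\<Sum>j<n. ln (pmf (A (Suc k)) (w ! j # c) / pmf (A k) c))"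
  proof (rule ln_prod)
    fix j assume "j \<in> {..<n}"
    then show "pmf (A (Suc k)) (w ! j # c) / pmf (A k) c \<noteq> 0" using Pj(1)[of j] Pc(1) by simp
  qed simp
  also have "\<dots> = (\<Sum>j<n. ln (pmf (A (Suc k)) (w ! j # c)) - ln (pmf (A k) c))"
  proof (intro sum.cong refl)
    fix j assume "j \<in> {..<n}"
    then show "ln (pmf (A (Suc k)) (w ! j # c) / pmf (A k) c)
        = ln (pmf (A (Suc k)) (w ! j # c)) - ln (pmf (A k) c)"
      using Pj(1)[of j] Pc(1) by (simp add: ln_div)
  qed
  finally have ln_prod_eq: "ln (pmf (replicate_pmf n (single_given k c)) (take n w))
      = (\<Sum>j<n. ln (pmf (A (Suc k)) (w ! j # c)) - ln (pmf (A k) c))"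
    unfolding prod .
  have "pmf (A (n+k)) w / pmf (A k) c > 0" using Pw Pc by simp
  from ln_divide_pos[OF this prod_pos[unfolded prod]]
  show "ln (pmf (block_given n k c) (take n w) / pmf (replicate_pmf n (single_given k c)) (take n w))
      = block_log_ratio n k w"
    unfolding block_log_ratio_eq[OF n1 nk w, folded c_def] block ln_prod_eq[unfolded prod, symmetric]
      ln_divide_pos[OF Pw(1) Pc(1)] prod by simp
qed

lemma split_sample_disintegration:
  assumes nk: "n + k \<le> m"
  shows "map_pmf (\<lambda>w. (take n w, drop n w)) (A (n+k))
    = bind_pmf (A k) (\<lambda>c. map_pmf (\<lambda>s. (s, c)) (block_given n k c))"
proof -
  define G where "G = map_pmf (\<lambda>w. (take n w, drop n w)) (A (n+k))"
  have snd_G: "map_pmf snd G = A k"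
    unfolding G_def map_pmf_comp using map_pmf_drop[OF nk] by simp
  have "G = bind_pmf (map_pmf snd G) (\<lambda>c. cond_pmf G {y. snd y = c})"
  proof (rule bind_cond_pmf_cancel[symmetric])
    fix x y assume "x \<in> set_pmf (map_pmf snd G)" "y \<in> set_pmf G" "snd y = x"
    then show "measure_pmf.prob G {y. snd y = x} = measure_pmf.prob (map_pmf snd G) {x. snd y = x}"
      by (simp add: measure_map_pmf vimage_def eq_commute)
  qed auto
  also have "\<dots> = bind_pmf (A k) (\<lambda>c. map_pmf (\<lambda>s. (s, c)) (block_given n k c))"
    using snd_G cond_pmf_split_sample[OF nk] unfolding G_def by (intro bind_pmf_cong) auto
  finally show ?thesis unfolding G_def .
qed

lemma
  assumes n1: "1 \<le> n" and nk: "n + k \<le> m"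
  defines "kl \<equiv> \<lambda>c. \<integral>s. ln (pmf (block_given n k c) s / pmf (replicate_pmf n (single_given k c)) s)
                        \<partial>block_given n k c"
  shows integrable_block_kl_inner: "c \<in> set_pmf (A k) \<Longrightarrow> integrable (block_given n k c)
      (\<lambda>s. ln (pmf (block_given n k c) s / pmf (replicate_pmf n (single_given k c)) s))"
    and integrable_block_kl: "integrable (A k) kl"
    and integral_block_kl: "(\<integral>c. kl c \<partial>A k) = convexity_defect rel_entropy n k"
proof -
  define psi where "psi = (\<lambda>(s, c). ln (pmf (block_given n k c) s / pmf (replicate_pmf n (single_given k c)) s))"
  define split where "split = (\<lambda>w::'a list. (take n w, drop n w))"
  have ae: "AE w in A (n+k). psi (split w) = block_log_ratio n k w"
    using log_ratio_block_given(3)[OF n1 nk] unfolding psi_def split_def by (simp add: AE_measure_pmf_iff)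
  have "integrable (A (n+k)) (\<lambda>w. psi (split w))"
    by (rule integrable_cong_AE_imp[OF integrable_block_log_ratio[OF nk]]) (use ae in \<open>auto simp: AE_measure_pmf_iff\<close>)
  then have int: "integrable (bind_pmf (A k) (\<lambda>c. map_pmf (\<lambda>s. (s, c)) (block_given n k c))) psi"
    unfolding split_sample_disintegration[OF nk, symmetric] split_def by simp
  have inner: "(\<integral>y. psi y \<partial>map_pmf (\<lambda>s. (s, c)) (block_given n k c)) = kl c" for c
    unfolding kl_def psi_def by simp
  show "integrable (A k) kl"
    using integrable_integral_bind_pmf(1)[OF int] unfolding inner .
  show "c \<in> set_pmf (A k) \<Longrightarrow> integrable (block_given n k c)
      (\<lambda>s. ln (pmf (block_given n k c) s / pmf (replicate_pmf n (single_given k c)) s))"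
    using integrable_bind_pmf_kernel[OF int] unfolding psi_def by simp
  have "(\<integral>c. kl c \<partial>A k) = (\<integral>w. psi (split w) \<partial>A (n+k))"
    using integrable_integral_bind_pmf(2)[OF int]
    unfolding inner split_sample_disintegration[OF nk, symmetric] split_def by simp
  also have "\<dots> = (\<integral>w. block_log_ratio n k w \<partial>A (n+k))" by (rule integral_cong_AE) (use ae in auto)
  finally show "(\<integral>c. kl c \<partial>A k) = convexity_defect rel_entropy n k"
    using integral_block_log_ratio[OF nk] by simp
qed

text \<open>Pinsker's inequality on each fibre, then Jensen's inequality for \<open>sqrt\<close>.\<close>
lemma integral_tv_block_given_le:
  assumes n1: "1 \<le> n" and nk: "n + k \<le> m"
  shows "(\<integral>c. tv_dist (block_given n k c) (replicate_pmf n (single_given k c)) \<partial>A k)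
    \<le> sqrt (convexity_defect rel_entropy n k / 2)"
proof -
  define kl where "kl = (\<lambda>c. \<integral>s. ln (pmf (block_given n k c) s / pmf (replicate_pmf n (single_given k c)) s)
                        \<partial>block_given n k c)"
  note int_inner = integrable_block_kl_inner[OF n1 nk]
  have pos: "pmf (replicate_pmf n (single_given k c)) s > 0"
    if c: "c \<in> set_pmf (A k)" and s: "s \<in> set_pmf (block_given n k c)" for c s
  proof -
    have "s \<in> take n ` (set_pmf (A (n+k)) \<inter> {w. drop n w = c})"
      using s set_cond_pmf[OF nonempty_drop_fibre[OF nk c]] unfolding block_given_def by simp
    then obtain w where "w \<in> set_pmf (A (n+k))" "drop n w = c" "s = take n w" by auto
    then show ?thesis using log_ratio_block_given(2)[OF n1 nk] by blast
  qed
  have tv_le: "tv_dist (block_given n k c) (replicate_pmf n (single_given k c)) \<le> sqrt (kl c / 2)"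
    if "c \<in> set_pmf (A k)" for c
    using pinsker_inequality_pmf[OF pos[OF that] int_inner[OF that]] unfolding kl_def .
  have kl_nonneg: "0 \<le> kl c" if "c \<in> set_pmf (A k)" for c
    using gibbs_inequality_pmf[OF pos[OF that] int_inner[OF that]] unfolding kl_def .
  have int_kl: "integrable (A k) kl"
    using integrable_block_kl[OF n1 nk] unfolding kl_def .
  have sqrt_bound: "norm (sqrt (kl c / 2)) \<le> norm ((kl c / 2 + 1) / 2)" if "c \<in> set_pmf (A k)" for c
  proof -
    have "sqrt (kl c / 2) \<le> (kl c / 2 + 1^2) / (2 * 1)"
      by (rule sqrt_le_tangent) (use kl_nonneg[OF that] in auto)
    then show ?thesis using kl_nonneg[OF that] by simp
  qed
  have "integrable (A k) (\<lambda>c. sqrt (kl c / 2))"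
  proof (rule Bochner_Integration.integrable_bound)
    show "integrable (A k) (\<lambda>c. (kl c / 2 + 1) / 2)" using int_kl by simp
    show "AE c in A k. norm (sqrt (kl c / 2)) \<le> norm ((kl c / 2 + 1) / 2)"
      using sqrt_bound by (simp add: AE_measure_pmf_iff)
  qed simp
  moreover have "integrable (A k) (\<lambda>c. tv_dist (block_given n k c) (replicate_pmf n (single_given k c)))"
    by (rule measure_pmf.integrable_const_bound[where B=1]) (simp_all add: tv_dist_nonneg tv_dist_le_1)
  ultimately have "(\<integral>c. tv_dist (block_given n k c) (replicate_pmf n (single_given k c)) \<partial>A k)
      \<le> (\<integral>c. sqrt (kl c / 2) \<partial>A k)"
    using tv_le by (intro integral_mono_AE) (auto simp: AE_measure_pmf_iff)
  also have "\<dots> \<le> sqrt (\<integral>c. kl c / 2 \<partial>A k)"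
    using int_kl kl_nonneg by (intro integral_sqrt_le_sqrt_integral) auto
  finally show ?thesis
    using integral_block_kl[OF n1 nk] unfolding kl_def by simp
qed

end

section \<open>Adaptive adversaries\<close>

lemma cost_ball_finite:
  assumes "S' \<in> cost_ball \<rho> S" "i < length S"
  shows "\<rho> (S ! i) (S' ! i) \<noteq> \<infinity>"
proof
  assume top: "\<rho> (S ! i) (S' ! i) = \<infinity>"
  have "\<rho> (S ! i) (S' ! i) \<le> (\<Sum>i<length S. \<rho> (S ! i) (S' ! i))"
    by (rule member_le_sum) (use assms(2) in auto)
  then have "(\<Sum>i<length S. \<rho> (S ! i) (S' ! i)) / of_nat (length S) = \<infinity>"
    using top assms(2) by (simp add: top_unique ennreal_divide_eq_top_iff)
  then show False using assms(1) unfolding cost_ball_def by (simp add: top_unique)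
qed

lemma finite_cost_set:
  assumes "cost_degree \<rho> = enat d"
  shows "finite {y. \<rho> s y \<noteq> \<infinity>}" and "card {y. \<rho> s y \<noteq> \<infinity>} \<le> d"
proof -
  have "(if finite {y. \<rho> s y \<noteq> \<infinity>} then enat (card {y. \<rho> s y \<noteq> \<infinity>}) else \<infinity>) \<le> enat d"
    unfolding assms[symmetric] cost_degree_def by (rule SUP_upper) simp
  then show "finite {y. \<rho> s y \<noteq> \<infinity>}" and "card {y. \<rho> s y \<noteq> \<infinity>} \<le> d"
    by (auto split: if_splits)
qed

definition reach_pmf :: "('a \<Rightarrow> 'a \<Rightarrow> ennreal) \<Rightarrow> 'a pmf \<Rightarrow> 'a pmf" where
  "reach_pmf \<rho> D = bind_pmf D (\<lambda>s. pmf_of_set {y. \<rho> s y \<noteq> \<infinity>})"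

lemma measure_finite_cost_le:
  fixes D :: "'a pmf"
  assumes cost: "is_cost \<rho>" and degree: "cost_degree \<rho> = enat d"
  shows "measure D {s. \<rho> s x \<noteq> \<infinity>} \<le> real d * pmf (reach_pmf \<rho> D) x"
proof -
  note fin = finite_cost_set[OF degree]
  have "s \<in> {y. \<rho> s y \<noteq> \<infinity>}" for s using cost by (simp add: is_cost_def)
  then have nonempty: "{y. \<rho> s y \<noteq> \<infinity>} \<noteq> {}" for s by blast
  then have card_pos: "0 < card {y. \<rho> s y \<noteq> \<infinity>}" for s using fin(1) by (simp add: card_gt_0_iff)
  then have d_pos: "0 < real d" using fin(2) by (metis gr0I le_zero_eq of_nat_0_less_iff)
  have "(\<integral>s. indicator {s. \<rho> s x \<noteq> \<infinity>} s / real d \<partial>D)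
      \<le> (\<integral>s. indicator {y. \<rho> s y \<noteq> \<infinity>} x / real (card {y. \<rho> s y \<noteq> \<infinity>}) \<partial>D)"
  proof (rule integral_mono)
    show "integrable D (\<lambda>s. indicator {s. \<rho> s x \<noteq> \<infinity>} s / real d)"
      by (rule measure_pmf.integrable_const_bound[where B=1]) (use d_pos in \<open>auto simp: indicator_def\<close>)
    show "integrable D (\<lambda>s. indicator {y. \<rho> s y \<noteq> \<infinity>} x / real (card {y. \<rho> s y \<noteq> \<infinity>}))"
      by (rule measure_pmf.integrable_const_bound[where B=1])
         (use card_pos in \<open>auto simp: indicator_def Suc_le_eq\<close>)
    show "indicator {s. \<rho> s x \<noteq> \<infinity>} s / real d
        \<le> indicator {y. \<rho> s y \<noteq> \<infinity>} x / real (card {y. \<rho> s y \<noteq> \<infinity>})" for s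
      using fin(2)[of s] card_pos[of s] by (auto simp: indicator_def intro!: divide_left_mono)
  qed
  also have "\<dots> = pmf (reach_pmf \<rho> D) x"
    unfolding reach_pmf_def pmf_bind using fin(1) nonempty by simp
  finally show ?thesis using d_pos by (simp add: field_simps)
qed

lemma prod_list_mono_nonneg:
  fixes f g :: "'a \<Rightarrow> real"
  assumes "\<And>x. 0 \<le> f x" "\<And>x. f x \<le> g x"
  shows "prod_list (map f w) \<le> prod_list (map g w)"
  using assms by (induction w) (auto intro!: mult_mono prod_list_nonneg order_trans[OF assms(1) assms(2)])

lemma coupled_select_finite_cost:
  assumes snd_\<nu>: "map_pmf snd \<nu> = replicate_pmf m D"
    and ball: "\<forall>(S', S) \<in> set_pmf \<nu>. S' \<in> cost_ball \<rho> S"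
    and in_\<nu>: "(Y, S) \<in> set_pmf \<nu>" and xs: "xs \<in> distinct_idx m t" and j: "j < t"
  shows "\<rho> (S ! (xs ! j)) (map ((!) Y) xs ! j) \<noteq> \<infinity>"
proof -
  have "S \<in> set_pmf (replicate_pmf m D)" using in_\<nu> unfolding snd_\<nu>[symmetric] by force
  then have "length S = m" by (simp add: set_replicate_pmf)
  moreover have "xs ! j < m" "j < length xs" using xs j by (auto simp: distinct_idx_def subset_eq)
  ultimately show ?thesis using ball in_\<nu> cost_ball_finite by fastforce
qed

text \<open>Each observed value must be at finite cost from the corresponding coordinate of a
  clean sample, and distinct coordinates of the clean sample are independent.\<close>
lemma pmf_select_adaptive_le:
  fixes D :: "'a pmf"
  assumes adaptive: "\<mu> \<in> adaptive m \<rho> D" and xs: "xs \<in> distinct_idx m t"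
  shows "pmf (map_pmf (\<lambda>Y. map ((!) Y) xs) \<mu>) w \<le> prod_list (map (\<lambda>x. measure D {s. \<rho> s x \<noteq> \<infinity>}) w)"
proof -
  obtain \<nu> where fst_\<nu>: "map_pmf fst \<nu> = \<mu>" and snd_\<nu>: "map_pmf snd \<nu> = replicate_pmf m D"
    and ball: "\<forall>(S', S) \<in> set_pmf \<nu>. S' \<in> cost_ball \<rho> S"
    using adaptive unfolding adaptive_def by auto
  have xs': "distinct xs" "length xs = t" "set xs \<subseteq> {..<m}" using xs unfolding distinct_idx_def by auto
  show ?thesis
  proof (cases "length w = t")
    case False
    then have "pmf (map_pmf (\<lambda>Y. map ((!) Y) xs) \<mu>) w = 0"
      using xs' by (intro pmf_map_outside) auto
    then show ?thesis by (auto intro!: prod_list_nonneg)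
  next
    case True
    define B where "B j = {s. \<rho> s (w ! j) \<noteq> \<infinity>}" for j
    have "pmf (map_pmf (\<lambda>Y. map ((!) Y) xs) \<mu>) w
        = measure \<nu> ((\<lambda>p. map ((!) (fst p)) xs) -` {w} \<inter> set_pmf \<nu>)"
      unfolding fst_\<nu>[symmetric] by (simp add: pmf_map vimage_def measure_Int_set_pmf)
    also have "\<dots> \<le> measure \<nu> (snd -` {S. \<forall>j<t. S ! (xs ! j) \<in> B j})"
      using coupled_select_finite_cost[OF snd_\<nu> ball _ xs] unfolding B_def
      by (intro measure_pmf.finite_measure_mono) auto
    also have "\<dots> = measure (replicate_pmf m D) {S. \<forall>j<t. S ! (xs ! j) \<in> B j}"
      unfolding snd_\<nu>[symmetric] by simp
    also have "\<dots> \<le> (\<Prod>j<t. measure D (B j))" by (rule measure_replicate_pmf_select_le) (use xs' in auto)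
    also have "\<dots> = prod_list (map (\<lambda>x. measure D {s. \<rho> s x \<noteq> \<infinity>}) w)"
      using prod_list_map_take[of "length w" w "\<lambda>x. measure D {s. \<rho> s x \<noteq> \<infinity>}"] True
      unfolding B_def by simp
    finally show ?thesis .
  qed
qed

lemma pmf_coord_sample_le:
  fixes D :: "'a pmf"
  assumes adaptive: "\<mu> \<in> adaptive m \<rho> D" and cost: "is_cost \<rho>" and degree: "cost_degree \<rho> = enat d"
    and t: "t \<le> m"
  shows "pmf (coord_sample m \<mu> t) w \<le> prod_list (map (\<lambda>x. real d * pmf (reach_pmf \<rho> D) x) w)"
proof -
  have "coord_sample m \<mu> t = bind_pmf (uniform_idx m t) (\<lambda>xs. map_pmf (\<lambda>Y. map ((!) Y) xs) \<mu>)"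
    unfolding coord_sample_def map_pmf_def by (rule bind_commute_pmf)
  then have "pmf (coord_sample m \<mu> t) w = (\<integral>xs. pmf (map_pmf (\<lambda>Y. map ((!) Y) xs) \<mu>) w \<partial>uniform_idx m t)"
    by (simp add: pmf_bind)
  also have "\<dots> \<le> (\<integral>xs. prod_list (map (\<lambda>x. measure D {s. \<rho> s x \<noteq> \<infinity>}) w) \<partial>uniform_idx m t)"
    using pmf_select_adaptive_le[OF adaptive] set_uniform_idx[OF t]
    by (intro integral_mono_AE)
       (auto simp: AE_measure_pmf_iff intro!: measure_pmf.integrable_const_bound[where B=1] pmf_le_1)
  also have "\<dots> \<le> prod_list (map (\<lambda>x. real d * pmf (reach_pmf \<rho> D) x) w)"
    using measure_finite_cost_le[OF cost degree] by (simp add: prod_list_mono_nonneg)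
  finally show ?thesis .
qed

locale adaptive_setting =
  fixes \<rho> :: "'a \<Rightarrow> 'a \<Rightarrow> ennreal" and D :: "'a pmf" and d m :: nat and \<mu> :: "'a list pmf"
  assumes cost: "is_cost \<rho>" and degree: "cost_degree \<rho> = enat d" and d_pos: "1 \<le> d"
    and adaptive: "\<mu> \<in> adaptive m \<rho> D"

sublocale adaptive_setting \<subseteq> exchangeable_family "coord_sample m \<mu>" m "real d" "reach_pmf \<rho> D"
proof
  show "\<And>t w. t \<le> m \<Longrightarrow> w \<in> set_pmf (coord_sample m \<mu> t) \<Longrightarrow> length w = t"
    by (rule length_coord_sample)
  show "\<And>ps L. distinct ps \<Longrightarrow> set ps \<subseteq> {..<L} \<Longrightarrow> L \<le> m \<Longrightarrow>
      map_pmf (\<lambda>w. map ((!) w) ps) (coord_sample m \<mu> L) = coord_sample m \<mu> (length ps)"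
    by (rule coord_sample_select)
  show "\<And>t w. t \<le> m \<Longrightarrow> pmf (coord_sample m \<mu> t) w \<le> prod_list (map (\<lambda>x. real d * pmf (reach_pmf \<rho> D) x) w)"
    by (rule pmf_coord_sample_le[OF adaptive cost degree])
  show "0 < real d" using d_pos by simp
qed

context adaptive_setting
begin

lemma group_eq_block_given:
  assumes nk: "n + k \<le> m" and c: "c \<in> set_pmf (coord_sample m \<mu> k)" "length c = k"
  shows "group m n \<mu> c = block_given n k c"
  unfolding group_def grouped_eq_coord_sample c(2) cond_pmf_split_sample[OF nk c(1)]
  by (simp add: map_pmf_comp)

lemma D_goal_eq_single_given:
  assumes "1 \<le> n" "n + k \<le> m" "c \<in> set_pmf (coord_sample m \<mu> k)" "length c = k"
  shows "D_goal m n \<mu> c = single_given k c"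
  unfolding D_goal_def group_eq_block_given[OF assms(2-4)] by (rule uniform_coord_block_given[OF assms(1-3)])

lemma expected_tv_grouped_le:
  assumes n1: "1 \<le> n" and nk: "n + k \<le> m"
  shows "measure_pmf.expectation (grouped m n k \<mu>)
      (\<lambda>(S, c). tv_dist (group m n \<mu> c) (replicate_pmf n (D_goal m n \<mu> c)))
    \<le> sqrt (convexity_defect rel_entropy n k / 2)"
proof -
  let ?tv = "\<lambda>c. tv_dist (group m n \<mu> c) (replicate_pmf n (D_goal m n \<mu> c))"
  have "measure_pmf.expectation (grouped m n k \<mu>) (\<lambda>(S, c). ?tv c)
      = measure_pmf.expectation (map_pmf (drop n) (coord_sample m \<mu> (n+k))) ?tv"
    unfolding grouped_eq_coord_sample by simp
  also have "\<dots> = (\<integral>c. tv_dist (block_given n k c) (replicate_pmf n (single_given k c)) \<partial>coord_sample m \<mu> k)"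
    unfolding map_pmf_drop[OF nk] using nk length_sample[of k]
    by (intro integral_cong_AE)
       (auto simp: AE_measure_pmf_iff group_eq_block_given D_goal_eq_single_given[OF n1])
  also have "\<dots> \<le> sqrt (convexity_defect rel_entropy n k / 2)"
    by (rule integral_tv_block_given_le[OF n1 nk])
  finally show ?thesis .
qed

end

theorem mainTheorem3:
  fixes D :: "'a :: countable pmf" and \<rho> :: "'a \<Rightarrow> 'a \<Rightarrow> ennreal"
    and d m n kmax :: nat and \<mu> :: "'a list pmf"
  assumes "is_cost \<rho>"
    and "cost_degree \<rho> = enat d" and "d \<ge> 1"
    and "m \<ge> 1" and "n \<ge> 1" and "kmax \<ge> 1"
    and "real (n + kmax) \<le> real m / 2"
    and "\<mu> \<in> adaptive m \<rho> D"
  shows "\<exists>k \<le> kmax.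
     measure_pmf.expectation (grouped m n k \<mu>)
        (\<lambda>(S, c). tv_dist (group m n \<mu> c) (replicate_pmf n (D_goal m n \<mu> c)))
     \<le> sqrt (real n ^ 2 * ln (real d) / (2 * real kmax))"
proof -
  interpret adaptive_setting \<rho> D d m \<mu> using assms by unfold_locales
  have "real (2 * (n + kmax)) \<le> real m" using assms(7) by simp
  then have m: "2 * (n + kmax) \<le> m" by (simp only: of_nat_le_iff)
  obtain k where k: "k \<le> kmax"
    and small: "convexity_defect rel_entropy n k \<le> real n ^ 2 * ln (real d) / real kmax"
    using exists_small_convexity_defect[OF rel_entropy_0 rel_entropy_nonpos rel_entropy_1_ge _ rel_entropy_convex]
      assms(3,5,6) m by fastforce
  have "measure_pmf.expectation (grouped m n k \<mu>)
      (\<lambda>(S, c). tv_dist (group m n \<mu> c) (replicate_pmf n (D_goal m n \<mu> c)))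
    \<le> sqrt (convexity_defect rel_entropy n k / 2)"
    using k m assms(5) by (intro expected_tv_grouped_le) auto
  also have "\<dots> \<le> sqrt (real n ^ 2 * ln (real d) / (2 * real kmax))"
    using small by (simp add: field_simps)
  finally show ?thesis using k by blast
qed

end
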